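(* Let $\epsilon,h_b\ge0$ and, for $\mathrm U\ge0$, $E(\mathrm U):=\min_{k\in\mathbb T^2}\min\sigma(A(\mathrm U,k))$. Then $\mathrm U\mapsto E(\mathrm U)$ is increasing and the limit $E(\infty):=\lim_{\mathrm U\to\infty}E(\mathrm U)$ exists and equals $\sup_{\mathrm U\ge0}E(\mathrm U)\le0$.
   Context: Notation: $\mathbb T^2=[-\pi,\pi)^2$ with normalized Haar measure $\nu$; $L^2(\mathbb T^2)=L^2(\mathbb T^2,\nu)$, scalar product antilinear in the first argument. For $f\in\ell^1(\mathbb Z^2)$, $\hat f(k)=\sum_{x}e^{ik\cdot x}f(x)$, $k\in\mathbb R^2$. $\hat{\mathfrak e}_x(p)=e^{ip\cdot x}$; $P_x$ the orthogonal projection onto $\mathbb C\hat{\mathfrak e}_x$; $M_g$ multiplication by $g$; $\cos(q):=\cos q_1+\cos q_2$. Data: $\epsilon,h_b\ge0$; $\mathrm u:\mathbb Z^2\to[0,\infty)$, $\upsilon,\mathfrak p_1,\mathfrak p_2:\mathbb Z^2\to\mathbb R$, all invariant under $90^\circ$-rotations, $\mathrm u,\upsilon$ absolutely summable, $\sum_z e^{\alpha_0|z|}|\mathfrak p_j(z)|<\infty$ for some $\alpha_0>0$, $\mathfrak p_2(z)=0$ for $z\notin(2\mathbb Z)^2$, $\mathfrak p_1+\mathfrak p_2\neq0$, and for every $k$ some $x$ with $\mathfrak p_2(x)\neq-e^{ik\cdot x/2}\mathfrak p_1(x)$. For $k,p\in\mathbb T^2$: $\mathfrak b(k)=h_b\epsilon(2-\cos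 k)$, $\mathfrak f(k)(p)=\epsilon(4-\cos(p+k)-\cos p)$, $\mathfrak d(k)(p)=\hat{\mathfrak p}_1(k+p)+\hat{\mathfrak p}_2(k/2+p)$. $A_{1,1}(\mathrm U,k)=M_{\mathfrak f(k)}+\sum_x\mathrm u(x)P_x+\mathrm UP_0$; on $\mathcal H=L^2(\mathbb T^2)\oplus\mathbb C$, $A(\mathrm U,k)(\varphi,z)=\big(A_{1,1}(\mathrm U,k)\varphi+\hat\upsilon(k)z\,\mathfrak d(k),\ \hat\upsilon(k)\langle\mathfrak d(k),\varphi\rangle+\mathfrak b(k)z\big)$. *)

theory Defs
  imports "HOL-Analysis.Analysis"
begin

text \<open>The torus T^2 is the box [-pi,pi) x [-pi,pi); the normalized Haar measure is
  Lebesgue measure on this box divided by (2 pi)^2.\<close>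

type_synonym mom = "real \<times> real"
type_synonym site = "int \<times> int"

definition dotp :: "mom \<Rightarrow> site \<Rightarrow> real" where
  "dotp k x = fst k * real_of_int (fst x) + snd k * real_of_int (snd x)"

definition TT :: "mom set" where
  "TT = {-pi..<pi} \<times> {-pi..<pi}"

definition rot90 :: "site \<Rightarrow> site" where
  "rot90 x = (- snd x, fst x)"

definition lnorm :: "site \<Rightarrow> real" where
  "lnorm z = sqrt ((real_of_int (fst z))^2 + (real_of_int (snd z))^2)"

definition cos2 :: "mom \<Rightarrow> real" where
  "cos2 q = cos (fst q) + cos (snd q)"

definition fhat :: "(site \<Rightarrow> real) \<Rightarrow> mom \<Rightarrow> complex" where
  "fhat f k = (\<Sum>\<^sub>\<infinity>x. exp (\<i> * complex_of_real (dotp k x)) * complex_of_real (f x))"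

definition ehat :: "site \<Rightarrow> mom \<Rightarrow> complex" where
  "ehat x p = exp (\<i> * complex_of_real (dotp p x))"

text \<open>L^2(T^2, nu), represented by Borel functions square integrable on the box
  (elements are identified up to nu-a.e. equality, see eqH).\<close>
definition L2T :: "(mom \<Rightarrow> complex) set" where
  "L2T = {\<phi>. \<phi> \<in> borel_measurable lborel \<and> set_integrable lborel TT (\<lambda>p. (cmod (\<phi> p))^2)}"

definition ipT :: "(mom \<Rightarrow> complex) \<Rightarrow> (mom \<Rightarrow> complex) \<Rightarrow> complex" where
  "ipT \<phi> \<psi> = complex_of_real (1 / (4 * pi^2)) * (LINT p:TT|lborel. cnj (\<phi> p) * \<psi> p)"

definition normT :: "(mom \<Rightarrow> complex) \<Rightarrow> real" where
  "normT \<phi> = sqrt ((1 / (4 * pi^2)) * (LINT p:TT|lborel. (cmod (\<phi> p))^2))"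

definition projT :: "site \<Rightarrow> (mom \<Rightarrow> complex) \<Rightarrow> (mom \<Rightarrow> complex)" where
  "projT x \<phi> = (\<lambda>p. ipT (ehat x) \<phi> * ehat x p)"

definition bfun :: "real \<Rightarrow> real \<Rightarrow> mom \<Rightarrow> real" where
  "bfun \<epsilon> hb k = hb * \<epsilon> * (2 - cos2 k)"

definition ffun :: "real \<Rightarrow> mom \<Rightarrow> mom \<Rightarrow> real" where
  "ffun \<epsilon> k p = \<epsilon> * (4 - cos2 (p + k) - cos2 p)"

definition dfun :: "(site \<Rightarrow> real) \<Rightarrow> (site \<Rightarrow> real) \<Rightarrow> mom \<Rightarrow> mom \<Rightarrow> complex" where
  "dfun p1 p2 k p = fhat p1 (k + p) + fhat p2 ((1/2) *\<^sub>R k + p)"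

definition A11 :: "real \<Rightarrow> (site \<Rightarrow> real) \<Rightarrow> real \<Rightarrow> mom \<Rightarrow> (mom \<Rightarrow> complex) \<Rightarrow> (mom \<Rightarrow> complex)" where
  "A11 \<epsilon> u U k \<phi> = (\<lambda>p. complex_of_real (ffun \<epsilon> k p) * \<phi> p
      + (\<Sum>\<^sub>\<infinity>x. complex_of_real (u x) * projT x \<phi> p)
      + complex_of_real U * projT 0 \<phi> p)"

definition Aop :: "real \<Rightarrow> real \<Rightarrow> (site \<Rightarrow> real) \<Rightarrow> (site \<Rightarrow> real) \<Rightarrow> (site \<Rightarrow> real) \<Rightarrow> (site \<Rightarrow> real)
    \<Rightarrow> real \<Rightarrow> mom \<Rightarrow> (mom \<Rightarrow> complex) \<times> complex \<Rightarrow> (mom \<Rightarrow> complex) \<times> complex" where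
  "Aop \<epsilon> hb u \<upsilon> p1 p2 U k v =
     ((\<lambda>p. A11 \<epsilon> u U k (fst v) p + fhat \<upsilon> k * snd v * dfun p1 p2 k p),
      fhat \<upsilon> k * ipT (dfun p1 p2 k) (fst v) + complex_of_real (bfun \<epsilon> hb k) * snd v)"

definition HT :: "((mom \<Rightarrow> complex) \<times> complex) set" where
  "HT = L2T \<times> UNIV"

definition normH :: "(mom \<Rightarrow> complex) \<times> complex \<Rightarrow> real" where
  "normH v = sqrt ((normT (fst v))^2 + (cmod (snd v))^2)"

definition eqH :: "(mom \<Rightarrow> complex) \<times> complex \<Rightarrow> (mom \<Rightarrow> complex) \<times> complex \<Rightarrow> bool" where
  "eqH v w = ((AE p in lborel. p \<in> TT \<longrightarrow> fst v p = fst w p) \<and> snd v = snd w)"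

definition shiftH :: "((mom \<Rightarrow> complex) \<times> complex \<Rightarrow> (mom \<Rightarrow> complex) \<times> complex) \<Rightarrow> complex
    \<Rightarrow> (mom \<Rightarrow> complex) \<times> complex \<Rightarrow> (mom \<Rightarrow> complex) \<times> complex" where
  "shiftH T lam v = ((\<lambda>p. fst (T v) p - lam * fst v p), snd (T v) - lam * snd v)"

text \<open>Spectrum: lambda is in the resolvent set iff T - lambda is a bijection of H
  (modulo null functions) with bounded inverse.\<close>
definition opspectrum :: "((mom \<Rightarrow> complex) \<times> complex \<Rightarrow> (mom \<Rightarrow> complex) \<times> complex) \<Rightarrow> complex set" where
  "opspectrum T = {lam. \<not> (\<exists>C. (\<forall>v\<in>HT. normH v \<le> C * normH (shiftH T lam v))
                          \<and> (\<forall>g\<in>HT. \<exists>v\<in>HT. eqH (shiftH T lam v) g))}"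

text \<open>E(U) = min_{k in T^2} min sigma(A(U,k)) (taken as infimum of the real spectrum)\<close>
definition Emin :: "real \<Rightarrow> real \<Rightarrow> (site \<Rightarrow> real) \<Rightarrow> (site \<Rightarrow> real) \<Rightarrow> (site \<Rightarrow> real) \<Rightarrow> (site \<Rightarrow> real)
    \<Rightarrow> real \<Rightarrow> real" where
  "Emin \<epsilon> hb u \<upsilon> p1 p2 U =
     Inf {t::real. \<exists>k\<in>TT. complex_of_real t \<in> opspectrum (Aop \<epsilon> hb u \<upsilon> p1 p2 U k)}"

end

theory Submission
  imports Defs
begin

(* For a bounded symmetric operator T on H the bottom of its real spectrum is the infimum of
   its numerical range {<v, T v> | norm v = 1}: if T - t is strictly coercive it is invertible,
   by the contraction v |-> v + rho (g - (T - t) v) and the completeness of L^2, while the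
   infimum itself is an approximate eigenvalue.  Hence E(U) is the infimum of <v, A(U,k) v>
   over k and unit vectors v.  In this form U only appears in the term U |<e_0, phi>|^2, so
   E is increasing; the vector v = (0, 1) at k = 0 has <v, A v> = b(0) = 0, so E <= 0; and an
   increasing function bounded above converges at infinity to its supremum. *)

section \<open>The torus with its normalized Haar measure\<close>

definition torus :: "mom measure" where
  "torus = restrict_space lborel TT"

definition haar_density :: real where
  "haar_density = 1 / (4 * pi^2)"

lemma haar_density_pos: "haar_density > 0"
  unfolding haar_density_def by simp

lemma borel_measurable_cnj[measurable]:
  "f \<in> borel_measurable M \<Longrightarrow> (\<lambda>x. cnj (f x)) \<in> borel_measurable M"
  using measurable_compose[of f M borel cnj borel] continuous_on_cnj[of UNIV id]
  by (simp add: borel_measurable_continuous_onI)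

lemma sets_lborel_TT[measurable]: "TT \<in> sets lborel"
proof -
  have "{-pi..<pi} \<times> {-pi..<pi::real} \<in> sets (lborel \<Otimes>\<^sub>M lborel)"
    by (rule pair_measureI) auto
  then show ?thesis unfolding TT_def lborel_prod .
qed

lemma sets_TT[simp]: "TT \<in> sets borel" "TT \<inter> space lborel \<in> sets lborel"
  using sets_lborel_TT by simp_all

lemma space_torus[simp]: "space torus = TT"
  by (simp add: torus_def space_restrict_space)

lemma emeasure_lborel_TT: "emeasure lborel TT = ennreal (4 * pi^2)"
proof -
  have "emeasure lborel TT = emeasure (lborel \<Otimes>\<^sub>M lborel) ({-pi..<pi} \<times> {-pi..<pi::real})"
    unfolding TT_def lborel_prod by simp
  also have "\<dots> = emeasure lborel {-pi..<pi::real} * emeasure lborel {-pi..<pi::real}"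
    by (rule lborel.emeasure_pair_measure_Times) auto
  also have "\<dots> = ennreal (4 * pi^2)"
    by (simp add: ennreal_mult[symmetric] power2_eq_square)
  finally show ?thesis .
qed

lemma emeasure_torus: "emeasure torus TT = ennreal (4 * pi^2)"
  unfolding torus_def
  by (subst emeasure_restrict_space) (auto simp: emeasure_lborel_TT space_restrict_space)

interpretation torus: finite_measure torus
  by (rule finite_measureI) (simp add: emeasure_torus)

lemma measure_torus: "measure torus TT = 4 * pi^2"
  using emeasure_torus by (simp add: measure_def)

lemma set_lebesgue_integral_TT:
  fixes f :: "mom \<Rightarrow> 'b::{banach, second_countable_topology}"
  shows "set_lebesgue_integral lborel TT f = integral\<^sup>L torus f"
  unfolding set_lebesgue_integral_def torus_def by (simp add: integral_restrict_space)

lemma set_integrable_TT_iff: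
  fixes f :: "mom \<Rightarrow> 'b::{banach, second_countable_topology}"
  shows "set_integrable lborel TT f \<longleftrightarrow> integrable torus f"
  unfolding set_integrable_def torus_def by (simp add: integrable_restrict_space)

lemma measurable_torusI: "f \<in> borel_measurable lborel \<Longrightarrow> f \<in> borel_measurable torus"
  unfolding torus_def by (rule measurable_restrict_space1)

section \<open>The space L2T\<close>

lemma L2T_iff:
  "\<phi> \<in> L2T \<longleftrightarrow> \<phi> \<in> borel_measurable lborel \<and> integrable torus (\<lambda>p. (cmod (\<phi> p))^2)"
  unfolding L2T_def by (simp add: set_integrable_TT_iff)

lemma ipT_eq_integral:
  "ipT \<phi> \<psi> = complex_of_real haar_density * integral\<^sup>L torus (\<lambda>p. cnj (\<phi> p) * \<psi> p)"
  unfolding ipT_def haar_density_def by (simp add: set_lebesgue_integral_TT)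

lemma normT_eq_integral:
  "normT \<phi> = sqrt (haar_density * integral\<^sup>L torus (\<lambda>p. (cmod (\<phi> p))^2))"
  unfolding normT_def haar_density_def by (simp add: set_lebesgue_integral_TT)

lemma L2T_measurable: "\<phi> \<in> L2T \<Longrightarrow> \<phi> \<in> borel_measurable torus"
  by (simp add: L2T_iff measurable_torusI)

lemma L2T_integrable_sq: "\<phi> \<in> L2T \<Longrightarrow> integrable torus (\<lambda>p. (cmod (\<phi> p))^2)"
  by (simp add: L2T_iff)

lemma integral_norm_sq_nonneg: "integral\<^sup>L M (\<lambda>p. (cmod (\<phi> p))^2) \<ge> 0"
  by (intro Bochner_Integration.integral_nonneg) simp

lemma normT_sq: "(normT \<phi>)^2 = haar_density * integral\<^sup>L torus (\<lambda>p. (cmod (\<phi> p))^2)"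
  unfolding normT_eq_integral using haar_density_pos integral_norm_sq_nonneg by simp

lemma normT_nonneg: "normT \<phi> \<ge> 0"
  unfolding normT_eq_integral using haar_density_pos integral_norm_sq_nonneg by simp

lemma L2T_integrable_cnj_mult:
  assumes "\<phi> \<in> L2T" "\<psi> \<in> L2T"
  shows "integrable torus (\<lambda>p. cnj (\<phi> p) * \<psi> p)"
proof (rule Bochner_Integration.integrable_bound)
  note [measurable] = L2T_measurable[OF assms(1)] L2T_measurable[OF assms(2)]
  show "(\<lambda>p. cnj (\<phi> p) * \<psi> p) \<in> borel_measurable torus"
    by measurable
  show "integrable torus (\<lambda>p. (cmod (\<phi> p))^2 + (cmod (\<psi> p))^2)"
    using assms by (simp add: L2T_integrable_sq)
  show "AE p in torus. norm (cnj (\<phi> p) * \<psi> p) \<le> norm ((cmod (\<phi> p))^2 + (cmod (\<psi> p))^2)"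
    using sum_squares_bound by (auto simp: norm_mult intro!: order.trans[OF _ sum_squares_bound])
qed

lemma L2T_add:
  assumes "\<phi> \<in> L2T" "\<psi> \<in> L2T"
  shows "(\<lambda>p. \<phi> p + \<psi> p) \<in> L2T"
proof -
  have sq: "(cmod (a + b))^2 \<le> 2 * (cmod a)^2 + 2 * (cmod b)^2" for a b :: complex
  proof -
    have "(cmod (a + b))^2 \<le> (cmod a + cmod b)^2"
      by (simp add: power_mono norm_triangle_ineq)
    also have "\<dots> \<le> 2 * (cmod a)^2 + 2 * (cmod b)^2"
      using sum_squares_bound[of "cmod a" "cmod b"] by (simp add: power2_sum)
    finally show ?thesis .
  qed
  note [measurable] = L2T_measurable[OF assms(1)] L2T_measurable[OF assms(2)]
  have "integrable torus (\<lambda>p. (cmod (\<phi> p + \<psi> p))^2)"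
    by (rule Bochner_Integration.integrable_bound[where f="\<lambda>p. 2 * (cmod (\<phi> p))^2 + 2 * (cmod (\<psi> p))^2"])
       (use assms sq in \<open>auto simp: L2T_integrable_sq\<close>)
  then show ?thesis
    using assms unfolding L2T_iff by (auto intro: borel_measurable_add)
qed

lemma L2T_mult:
  assumes "\<phi> \<in> L2T"
  shows "(\<lambda>p. c * \<phi> p) \<in> L2T"
proof -
  have "integrable torus (\<lambda>p. (cmod c)^2 * (cmod (\<phi> p))^2)"
    using assms by (simp add: L2T_integrable_sq)
  then show ?thesis
    using assms unfolding L2T_iff by (auto simp: norm_mult power_mult_distrib)
qed

lemma L2T_diff:
  assumes "\<phi> \<in> L2T" "\<psi> \<in> L2T"
  shows "(\<lambda>p. \<phi> p - \<psi> p) \<in> L2T"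
  using L2T_add[OF assms(1) L2T_mult[OF assms(2), of "-1"]] by simp

lemma L2T_bounded:
  assumes "f \<in> borel_measurable lborel" "\<And>p. cmod (f p) \<le> B"
  shows "f \<in> L2T"
proof -
  note [measurable] = measurable_torusI[OF assms(1)]
  have "integrable torus (\<lambda>p. (cmod (f p))^2)"
    by (rule torus.integrable_const_bound[where B="B^2"])
       (auto intro!: power_mono assms(2))
  then show ?thesis
    using assms by (simp add: L2T_iff)
qed

lemma L2T_zero: "(\<lambda>p. 0) \<in> L2T"
  by (rule L2T_bounded[where B=0]) auto

lemma L2T_one: "(\<lambda>p. 1) \<in> L2T"
  by (rule L2T_bounded[where B=1]) auto

lemma L2T_integrable:
  assumes "\<phi> \<in> L2T"
  shows "integrable torus \<phi>"
  using L2T_integrable_cnj_mult[OF L2T_one assms] by simp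

lemma ipT_swap: "ipT \<psi> \<phi> = cnj (ipT \<phi> \<psi>)"
proof -
  have "(\<lambda>p. cnj (\<psi> p) * \<phi> p) = (\<lambda>p. cnj (cnj (\<phi> p) * \<psi> p))"
    by (auto simp: mult.commute)
  then have "integral\<^sup>L torus (\<lambda>p. cnj (\<psi> p) * \<phi> p) = cnj (integral\<^sup>L torus (\<lambda>p. cnj (\<phi> p) * \<psi> p))"
    using Bochner_Integration.integral_cnj[of torus "\<lambda>p. cnj (\<phi> p) * \<psi> p"] by simp
  then show ?thesis
    unfolding ipT_eq_integral by simp
qed

lemma ipT_add_right:
  assumes "\<phi> \<in> L2T" "\<psi> \<in> L2T" "\<eta> \<in> L2T"
  shows "ipT \<phi> (\<lambda>p. \<psi> p + \<eta> p) = ipT \<phi> \<psi> + ipT \<phi> \<eta>"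
  unfolding ipT_eq_integral distrib_left
  using L2T_integrable_cnj_mult[OF assms(1,2)] L2T_integrable_cnj_mult[OF assms(1,3)]
  by (simp add: distrib_left)

lemma ipT_mult_right: "ipT \<phi> (\<lambda>p. c * \<psi> p) = c * ipT \<phi> \<psi>"
  unfolding ipT_eq_integral by (simp add: ac_simps)

lemma ipT_diff_right:
  assumes "\<phi> \<in> L2T" "\<psi> \<in> L2T" "\<eta> \<in> L2T"
  shows "ipT \<phi> (\<lambda>p. \<psi> p - \<eta> p) = ipT \<phi> \<psi> - ipT \<phi> \<eta>"
  using ipT_add_right[OF assms(1,2) L2T_mult[OF assms(3), of "-1"]] ipT_mult_right[of \<phi> "-1" \<eta>]
  by simp

lemma ipT_real_mult_swap:
  "ipT \<psi> (\<lambda>p. complex_of_real (g p) * \<phi> p) = cnj (ipT \<phi> (\<lambda>p. complex_of_real (g p) * \<psi> p))"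
proof -
  have "cnj (ipT \<phi> (\<lambda>p. complex_of_real (g p) * \<psi> p)) = ipT (\<lambda>p. complex_of_real (g p) * \<psi> p) \<phi>"
    by (rule ipT_swap[symmetric])
  also have "\<dots> = ipT \<psi> (\<lambda>p. complex_of_real (g p) * \<phi> p)"
    unfolding ipT_eq_integral by (simp add: ac_simps)
  finally show ?thesis ..
qed

lemma cnj_mult_self: "cnj z * z = complex_of_real ((cmod z)^2)"
  using complex_norm_square[of z] by (simp add: mult.commute)

lemma ipT_self: "ipT \<phi> \<phi> = complex_of_real ((normT \<phi>)^2)"
  unfolding ipT_eq_integral normT_sq cnj_mult_self integral_complex_of_real by simp

lemma normT_eq_0_AE:
  assumes "\<phi> \<in> L2T" "normT \<phi> = 0"
  shows "AE p in lborel. p \<in> TT \<longrightarrow> \<phi> p = 0"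
proof -
  have "integral\<^sup>L torus (\<lambda>p. (cmod (\<phi> p))^2) = 0"
    using assms(2) normT_sq[of \<phi>] haar_density_pos by simp
  then have "AE p in torus. (cmod (\<phi> p))^2 = 0"
    using integral_nonneg_eq_0_iff_AE[OF L2T_integrable_sq[OF assms(1)]] by simp
  then show ?thesis
    unfolding torus_def by (simp add: AE_restrict_space_iff)
qed

lemma normT_mult: "normT (\<lambda>p. c * \<phi> p) = cmod c * normT \<phi>"
  unfolding normT_eq_integral
  by (simp add: norm_mult power_mult_distrib real_sqrt_mult ac_simps)

lemma normT_one: "normT (\<lambda>p. 1) = 1"
  unfolding normT_eq_integral using measure_torus by (simp add: haar_density_def)

lemma normT_bounded:
  assumes "h \<in> L2T" "\<And>p. cmod (h p) \<le> B"
  shows "normT h \<le> B"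
proof -
  have B: "B \<ge> 0"
    using assms(2)[of undefined] norm_ge_zero order_trans by blast
  have "integral\<^sup>L torus (\<lambda>p. (cmod (h p))^2) \<le> integral\<^sup>L torus (\<lambda>p. B^2)"
    using assms by (intro integral_mono L2T_integrable_sq power_mono) auto
  then have "(normT h)^2 \<le> B^2"
    unfolding normT_sq using haar_density_pos measure_torus
    by (simp add: haar_density_def field_simps)
  then show ?thesis
    using B by (simp add: abs_le_iff power2_le_iff_abs_le)
qed

lemma L2T_mult_bounded:
  assumes g: "g \<in> borel_measurable lborel" "\<And>p. cmod (g p) \<le> B" and \<phi>: "\<phi> \<in> L2T"
  shows "(\<lambda>p. g p * \<phi> p) \<in> L2T" "normT (\<lambda>p. g p * \<phi> p) \<le> B * normT \<phi>"
proof -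
  have B: "B \<ge> 0"
    using g(2)[of undefined] norm_ge_zero order_trans by blast
  have le: "(cmod (g p * \<phi> p))^2 \<le> B^2 * (cmod (\<phi> p))^2" for p
    using g(2)[of p] by (simp add: norm_mult power_mult_distrib mult_right_mono power_mono)
  note [measurable] = L2T_measurable[OF \<phi>] measurable_torusI[OF g(1)]
  have int: "integrable torus (\<lambda>p. (cmod (g p * \<phi> p))^2)"
    by (rule Bochner_Integration.integrable_bound[where f="\<lambda>p. B^2 * (cmod (\<phi> p))^2"])
       (use L2T_integrable_sq[OF \<phi>] le in auto)
  show "(\<lambda>p. g p * \<phi> p) \<in> L2T"
    using int g(1) \<phi> unfolding L2T_iff by (auto intro: borel_measurable_times)
  have "integral\<^sup>L torus (\<lambda>p. (cmod (g p * \<phi> p))^2) \<le> integral\<^sup>L torus (\<lambda>p. B^2 * (cmod (\<phi> p))^2)"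
    by (rule integral_mono[OF int]) (use L2T_integrable_sq[OF \<phi>] le in auto)
  then have "(normT (\<lambda>p. g p * \<phi> p))^2 \<le> (B * normT \<phi>)^2"
    unfolding normT_sq power_mult_distrib using haar_density_pos by (simp add: ac_simps)
  then show "normT (\<lambda>p. g p * \<phi> p) \<le> B * normT \<phi>"
    using B normT_nonneg by (simp add: power2_le_iff_abs_le)
qed

section \<open>The Hilbert space H = L2T \<times> \<complex>\<close>

type_synonym hvec = "(mom \<Rightarrow> complex) \<times> complex"

definition hadd :: "hvec \<Rightarrow> hvec \<Rightarrow> hvec" where
  "hadd v w = ((\<lambda>p. fst v p + fst w p), snd v + snd w)"

definition hdiff :: "hvec \<Rightarrow> hvec \<Rightarrow> hvec" where
  "hdiff v w = ((\<lambda>p. fst v p - fst w p), snd v - snd w)"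

definition hscale :: "complex \<Rightarrow> hvec \<Rightarrow> hvec" where
  "hscale c v = ((\<lambda>p. c * fst v p), c * snd v)"

definition hinner :: "hvec \<Rightarrow> hvec \<Rightarrow> complex" where
  "hinner v w = ipT (fst v) (fst w) + cnj (snd v) * snd w"

lemma HT_iff: "v \<in> HT \<longleftrightarrow> fst v \<in> L2T"
  unfolding HT_def by (cases v) auto

lemma HT_hadd: "v \<in> HT \<Longrightarrow> w \<in> HT \<Longrightarrow> hadd v w \<in> HT"
  by (simp add: HT_iff hadd_def L2T_add)

lemma HT_hdiff: "v \<in> HT \<Longrightarrow> w \<in> HT \<Longrightarrow> hdiff v w \<in> HT"
  by (simp add: HT_iff hdiff_def L2T_diff)

lemma HT_hscale: "v \<in> HT \<Longrightarrow> hscale c v \<in> HT"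
  by (simp add: HT_iff hscale_def L2T_mult)

lemma HT_zero: "((\<lambda>p. 0), 0) \<in> HT"
  by (simp add: HT_iff L2T_zero)

lemma hdiff_eq_hadd_hscale: "hdiff v w = hadd v (hscale (-1) w)"
  by (simp add: hdiff_def hadd_def hscale_def)

lemma hinner_swap: "hinner w v = cnj (hinner v w)"
  unfolding hinner_def by (simp add: ipT_swap[of "fst w"] mult.commute)

lemma hinner_add_right: "v \<in> HT \<Longrightarrow> w \<in> HT \<Longrightarrow> x \<in> HT \<Longrightarrow> hinner v (hadd w x) = hinner v w + hinner v x"
  by (simp add: hinner_def hadd_def HT_iff ipT_add_right distrib_left)

lemma hinner_diff_right: "v \<in> HT \<Longrightarrow> w \<in> HT \<Longrightarrow> x \<in> HT \<Longrightarrow> hinner v (hdiff w x) = hinner v w - hinner v x"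
  by (simp add: hinner_def hdiff_def HT_iff ipT_diff_right right_diff_distrib)

lemma hinner_scale_right: "hinner v (hscale c w) = c * hinner v w"
  by (simp add: hinner_def hscale_def ipT_mult_right distrib_left)

lemma hinner_add_left: "v \<in> HT \<Longrightarrow> w \<in> HT \<Longrightarrow> x \<in> HT \<Longrightarrow> hinner (hadd w x) v = hinner w v + hinner x v"
  by (subst (1 2 3) hinner_swap) (simp add: hinner_add_right)

lemma hinner_scale_left: "hinner (hscale c w) v = cnj c * hinner w v"
  by (subst (1 2) hinner_swap) (simp add: hinner_scale_right)

lemma Re_hinner_swap: "Re (hinner v w) = Re (hinner w v)"
  by (subst hinner_swap) simp

lemma normH_nonneg: "normH v \<ge> 0"
  unfolding normH_def by simp

lemma normH_sq: "(normH v)^2 = (normT (fst v))^2 + (cmod (snd v))^2"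
  unfolding normH_def by simp

lemma hinner_self: "hinner v v = complex_of_real ((normH v)^2)"
  by (simp add: hinner_def normH_sq ipT_self cnj_mult_self)

lemma normH_Pair_0: "normH (\<phi>, 0) = normT \<phi>"
  unfolding normH_def using normT_nonneg by simp

lemma normT_le_normH: "normT \<phi> \<le> normH (\<phi>, z)"
  unfolding normH_def by (rule real_le_rsqrt) simp

lemma norm_le_normH: "cmod z \<le> normH (\<phi>, z)"
  unfolding normH_def by (rule real_le_rsqrt) simp

lemma normH_le_sum: "normH (\<phi>, z) \<le> normT \<phi> + cmod z"
  unfolding normH_def by (simp add: sqrt_sum_squares_le_sum normT_nonneg)

lemma normH_hdiff_commute: "normH (hdiff v w) = normH (hdiff w v)"
  unfolding normH_def normT_def hdiff_def by (simp add: norm_minus_commute)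

lemma normH_hdiff_self: "normH (hdiff v v) = 0"
  by (simp add: normH_def normT_def hdiff_def)

lemma quadratic_nonneg_imp_discrim:
  fixes a b c :: real
  assumes "\<And>t. 0 \<le> a + 2 * t * b + t^2 * c" "c \<ge> 0"
  shows "b^2 \<le> a * c"
proof (cases "c = 0")
  case True
  have "b = 0"
  proof (rule ccontr)
    assume "b \<noteq> 0"
    have "0 \<le> a + 2 * (- (a + 1) / (2 * b)) * b + (- (a + 1) / (2 * b))^2 * c"
      by (rule assms(1))
    also have "\<dots> = -1"
      using \<open>b \<noteq> 0\<close> True by (simp add: field_simps)
    finally show False by simp
  qed
  then show ?thesis
    using True by simp
next
  case False
  then have c: "c > 0"
    using assms(2) by simp
  have "0 \<le> a + 2 * (- b / c) * b + (- b / c)^2 * c"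
    by (rule assms(1))
  also have "\<dots> = a - b^2 / c"
    using c by (simp add: field_simps power2_eq_square)
  finally show ?thesis
    using c by (simp add: field_simps)
qed

lemma normH_hadd_hscale_sq:
  assumes "v \<in> HT" "w \<in> HT"
  shows "(normH (hadd v (hscale (complex_of_real r) w)))^2
         = (normH v)^2 + 2 * r * Re (hinner v w) + r^2 * (normH w)^2"
proof -
  let ?w = "hscale (complex_of_real r) w"
  have "complex_of_real ((normH (hadd v ?w))^2) = hinner (hadd v ?w) (hadd v ?w)"
    by (simp add: hinner_self)
  also have "\<dots> = hinner v v + complex_of_real r * hinner v w
      + (complex_of_real r * hinner w v + complex_of_real r * complex_of_real r * hinner w w)"
    using assms by (simp add: hinner_add_left hinner_add_right hinner_scale_left hinner_scale_right
        HT_hadd HT_hscale distrib_left)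
  finally have "(normH (hadd v ?w))^2 = Re (hinner v v + complex_of_real r * hinner v w
      + (complex_of_real r * hinner w v + complex_of_real r * complex_of_real r * hinner w w))"
    by (metis Re_complex_of_real)
  then show ?thesis
    by (simp add: hinner_self hinner_swap[of w v] power2_eq_square algebra_simps)
qed

lemma Re_hinner_sq_le:
  assumes "v \<in> HT" "w \<in> HT"
  shows "(Re (hinner v w))^2 \<le> (normH v)^2 * (normH w)^2"
  by (rule quadratic_nonneg_imp_discrim) (metis normH_hadd_hscale_sq[OF assms] zero_le_power2, simp)

lemma normH_hscale: "v \<in> HT \<Longrightarrow> normH (hscale c v) = cmod c * normH v"
  unfolding normH_def hscale_def
  using normT_mult[of c "fst v"] normT_nonneg[of "fst v"]
  by (simp add: norm_mult power_mult_distrib real_sqrt_mult distrib_left[symmetric])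

lemma hinner_Cauchy_Schwarz:
  assumes "v \<in> HT" "w \<in> HT"
  shows "cmod (hinner v w) \<le> normH v * normH w"
proof (cases "hinner v w = 0")
  case True
  then show ?thesis
    using normH_nonneg by simp
next
  case False
  let ?z = "hinner v w"
  let ?c = "cnj ?z / complex_of_real (cmod ?z)"
  \<comment> \<open>rotating w by the phase of the inner product makes it real and positive\<close>
  have "hinner v (hscale ?c w) = complex_of_real (cmod ?z)"
    using False by (simp add: hinner_scale_right cnj_mult_self power2_eq_square)
  then have "(cmod ?z)^2 \<le> (normH v)^2 * (normH (hscale ?c w))^2"
    using Re_hinner_sq_le[OF assms(1) HT_hscale[OF assms(2), of ?c]] by simp
  also have "\<dots> = (normH v * normH w)^2"
    using assms False by (simp add: normH_hscale norm_divide power_mult_distrib)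
  finally show ?thesis
    using normH_nonneg by (meson power2_le_imp_le zero_le_mult_iff)
qed

lemma normH_triangle:
  assumes "v \<in> HT" "w \<in> HT"
  shows "normH (hadd v w) \<le> normH v + normH w"
proof -
  have "(normH (hadd v w))^2 = (normH v)^2 + 2 * Re (hinner v w) + (normH w)^2"
    using normH_hadd_hscale_sq[OF assms, of 1] by (simp add: hadd_def hscale_def)
  also have "\<dots> \<le> (normH v + normH w)^2"
    using hinner_Cauchy_Schwarz[OF assms] complex_Re_le_cmod[of "hinner v w"]
    by (simp add: power2_sum)
  finally show ?thesis
    using normH_nonneg by (meson add_nonneg_nonneg power2_le_imp_le)
qed

lemma normH_hdiff_le: "v \<in> HT \<Longrightarrow> w \<in> HT \<Longrightarrow> normH (hdiff v w) \<le> normH v + normH w"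
  using normH_triangle[of v "hscale (-1) w"] by (simp add: hdiff_eq_hadd_hscale HT_hscale normH_hscale)

lemma normH_hdiff_triangle:
  assumes "u \<in> HT" "v \<in> HT" "w \<in> HT"
  shows "normH (hdiff u w) \<le> normH (hdiff u v) + normH (hdiff v w)"
proof -
  have "hdiff u w = hadd (hdiff u v) (hdiff v w)"
    by (simp add: hdiff_def hadd_def)
  then show ?thesis
    using normH_triangle[OF HT_hdiff[OF assms(1,2)] HT_hdiff[OF assms(2,3)]] by simp
qed

lemma normT_add:
  assumes "\<phi> \<in> L2T" "\<psi> \<in> L2T"
  shows "normT (\<lambda>p. \<phi> p + \<psi> p) \<le> normT \<phi> + normT \<psi>"
  using normH_triangle[of "(\<phi>, 0)" "(\<psi>, 0)"] assms by (simp add: HT_iff hadd_def normH_Pair_0)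

lemma ipT_Cauchy_Schwarz:
  assumes "\<phi> \<in> L2T" "\<psi> \<in> L2T"
  shows "cmod (ipT \<phi> \<psi>) \<le> normT \<phi> * normT \<psi>"
  using hinner_Cauchy_Schwarz[of "(\<phi>, 0)" "(\<psi>, 0)"] assms by (simp add: HT_iff hinner_def normH_Pair_0)

lemma eqH_if_normH_hdiff_eq_0:
  assumes "v \<in> HT" "g \<in> HT" "normH (hdiff v g) = 0"
  shows "eqH v g"
proof -
  have "normT (fst (hdiff v g)) = 0" "snd (hdiff v g) = 0"
    using assms(3) unfolding normH_def by (simp_all add: normT_nonneg)
  then show ?thesis
    using normT_eq_0_AE[of "fst (hdiff v g)"] assms(1,2) HT_hdiff[OF assms(1,2)]
    unfolding eqH_def HT_iff by (auto simp: hdiff_def)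
qed

section \<open>Completeness\<close>

lemma L1_le_normT:
  assumes "h \<in> L2T"
  shows "haar_density * integral\<^sup>L torus (\<lambda>p. cmod (h p)) \<le> normT h"
proof -
  let ?a = "\<lambda>p. complex_of_real (cmod (h p))"
  have [measurable]: "h \<in> borel_measurable lborel"
    using assms L2T_iff by blast
  have "?a \<in> borel_measurable lborel"
    by measurable
  then have a: "?a \<in> L2T"
    using assms unfolding L2T_iff by simp
  have "ipT (\<lambda>p. 1) ?a = complex_of_real haar_density * integral\<^sup>L torus ?a"
    by (simp add: ipT_eq_integral)
  also have "\<dots> = complex_of_real (haar_density * integral\<^sup>L torus (\<lambda>p. cmod (h p)))"
    by (simp only: integral_complex_of_real of_real_mult)
  finally have "\<bar>haar_density * integral\<^sup>L torus (\<lambda>p. cmod (h p))\<bar> \<le> normT (\<lambda>p. 1) * normT ?a"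
    using ipT_Cauchy_Schwarz[OF L2T_one a] by (simp only: norm_of_real)
  also have "\<dots> = normT h"
    by (simp add: normT_one normT_def)
  finally show ?thesis
    by linarith
qed

lemma nn_integral_norm_sq_L2T:
  "\<phi> \<in> L2T \<Longrightarrow> (\<integral>\<^sup>+p. ennreal ((cmod (\<phi> p))^2) \<partial>torus) = ennreal ((normT \<phi>)^2 / haar_density)"
  using nn_integral_eq_integral[OF L2T_integrable_sq] haar_density_pos by (simp add: normT_sq)

lemma L2T_normT_le_of_nn_integral_le:
  assumes g: "g \<in> borel_measurable lborel" and "e \<ge> 0"
    and fin: "(\<integral>\<^sup>+p. ennreal ((cmod (g p))^2) \<partial>torus) \<le> ennreal (e^2 / haar_density)"
  shows "g \<in> L2T" "normT g \<le> e"
proof -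
  note [measurable] = measurable_torusI[OF g]
  have int: "integrable torus (\<lambda>p. (cmod (g p))^2)"
    using le_less_trans[OF fin ennreal_less_top] by (intro integrableI_bounded) auto
  then show "g \<in> L2T"
    using g by (simp add: L2T_iff)
  have "ennreal (integral\<^sup>L torus (\<lambda>p. (cmod (g p))^2)) \<le> ennreal (e^2 / haar_density)"
    using fin nn_integral_eq_integral[OF int] by simp
  then have "(normT g)^2 \<le> e^2"
    unfolding normT_sq using haar_density_pos by (simp add: field_simps)
  then show "normT g \<le> e"
    using \<open>e \<ge> 0\<close> normT_nonneg by (simp add: power2_le_iff_abs_le)
qed

text \<open>Fatou's lemma, in the form needed for the Riesz--Fischer theorem.\<close>

lemma L2T_normT_le_of_AE_limit:
  assumes f: "\<And>i. f i \<in> L2T" and g: "g \<in> borel_measurable lborel"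
    and lim: "AE p in torus. (\<lambda>i. f i p) \<longlonglongrightarrow> g p"
    and bound: "eventually (\<lambda>i. normT (f i) \<le> e) sequentially"
  shows "g \<in> L2T" "normT g \<le> e"
proof -
  obtain N where N: "\<And>i. i \<ge> N \<Longrightarrow> normT (f i) \<le> e"
    using bound unfolding eventually_sequentially by blast
  have e: "e \<ge> 0"
    using N[of N] normT_nonneg[of "f N"] by simp
  note [measurable] = measurable_torusI[OF g] L2T_measurable[OF f]
  have "(\<integral>\<^sup>+p. ennreal ((cmod (g p))^2) \<partial>torus)
      = (\<integral>\<^sup>+p. liminf (\<lambda>i. ennreal ((cmod (f i p))^2)) \<partial>torus)"
  proof (rule nn_integral_cong_AE)
    show "AE p in torus. ennreal ((cmod (g p))^2) = liminf (\<lambda>i. ennreal ((cmod (f i p))^2))"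
      using lim
    proof eventually_elim
      case (elim p)
      have "(\<lambda>i. ennreal ((cmod (f i p))^2)) \<longlonglongrightarrow> ennreal ((cmod (g p))^2)"
        by (intro tendsto_ennrealI tendsto_intros elim)
      from lim_imp_Liminf[OF _ this] show ?case
        by simp
    qed
  qed
  also have "\<dots> \<le> liminf (\<lambda>i. \<integral>\<^sup>+p. ennreal ((cmod (f i p))^2) \<partial>torus)"
    by (intro nn_integral_liminf) measurable
  also have "\<dots> \<le> ennreal (e^2 / haar_density)"
  proof (rule Liminf_le)
    have "(normT (f i))^2 / haar_density \<le> e^2 / haar_density" if "i \<ge> N" for i
      using N[OF that] normT_nonneg[of "f i"] haar_density_pos
      by (intro divide_right_mono power_mono) auto
    then show "eventually (\<lambda>i. (\<integral>\<^sup>+p. ennreal ((cmod (f i p))^2) \<partial>torus) \<le> ennreal (e^2 / haar_density)) sequentially"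
      unfolding nn_integral_norm_sq_L2T[OF f] by (intro eventually_sequentiallyI[of N] ennreal_leI)
  qed simp
  finally show "g \<in> L2T" "normT g \<le> e"
    using L2T_normT_le_of_nn_integral_le[OF g e] by blast+
qed

lemma L2T_Cauchy_AE_convergent_subseq:
  fixes s :: "nat \<Rightarrow> mom \<Rightarrow> complex"
  assumes s: "\<And>n. s n \<in> L2T"
    and Cauchy: "\<And>e. e > 0 \<Longrightarrow> \<exists>N. \<forall>m\<ge>N. \<forall>n\<ge>N. normT (\<lambda>p. s m p - s n p) < e"
  obtains r \<phi> where "strict_mono r" "\<phi> \<in> borel_measurable lborel"
    "AE p in torus. (\<lambda>i. s (r i) p) \<longlonglongrightarrow> \<phi> p"
proof -
  have L1_Cauchy: "\<exists>N. \<forall>i\<ge>N. \<forall>j\<ge>N. LINT p|torus. norm (s i p - s j p) < e" if "e > 0" for e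
  proof -
    obtain N where N: "\<And>i j. i \<ge> N \<Longrightarrow> j \<ge> N \<Longrightarrow> normT (\<lambda>p. s i p - s j p) < haar_density * e"
      using Cauchy[of "haar_density * e"] \<open>e > 0\<close> haar_density_pos by auto
    have "haar_density * (LINT p|torus. norm (s i p - s j p)) < haar_density * e" if "i \<ge> N" "j \<ge> N" for i j
      using L1_le_normT[OF L2T_diff[OF s s], of i j] N[OF that] by simp
    then show ?thesis
      using haar_density_pos by auto
  qed
  obtain r where r: "strict_mono r" "AE p in torus. Cauchy (\<lambda>i. s (r i) p)"
    using cauchy_L1_AE_cauchy_subseq[OF L2T_integrable[OF s] L1_Cauchy] by blast
  note [measurable] = L2T_iff[THEN iffD1, OF s, THEN conjunct1]
  define \<phi> where "\<phi> p = (if p \<in> TT then lim (\<lambda>i. s (r i) p) else 0)" for p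
  have "\<phi> \<in> borel_measurable lborel"
    unfolding \<phi>_def by measurable
  moreover have "AE p in torus. (\<lambda>i. s (r i) p) \<longlonglongrightarrow> \<phi> p"
    using r(2) AE_space[of torus]
    by eventually_elim (auto simp: \<phi>_def Cauchy_convergent_iff convergent_LIMSEQ_iff)
  ultimately show ?thesis
    using that r(1) by blast
qed

lemma L2T_complete:
  assumes s: "\<And>n. s n \<in> L2T"
    and Cauchy: "\<And>e. e > 0 \<Longrightarrow> \<exists>N. \<forall>m\<ge>N. \<forall>n\<ge>N. normT (\<lambda>p. s m p - s n p) < e"
  shows "\<exists>\<phi>\<in>L2T. (\<lambda>n. normT (\<lambda>p. s n p - \<phi> p)) \<longlonglongrightarrow> 0"
proof -
  obtain r \<phi> where r: "strict_mono r" and [measurable]: "\<phi> \<in> borel_measurable lborel"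
    and lim: "AE p in torus. (\<lambda>i. s (r i) p) \<longlonglongrightarrow> \<phi> p"
    using L2T_Cauchy_AE_convergent_subseq[OF s Cauchy] by blast
  note [measurable] = L2T_iff[THEN iffD1, OF s, THEN conjunct1]
  have lim_diff: "AE p in torus. (\<lambda>i. s (r i) p - s n p) \<longlonglongrightarrow> \<phi> p - s n p" for n
    using lim by eventually_elim (rule tendsto_diff[OF _ tendsto_const])
  have close: "\<exists>N. \<forall>n\<ge>N. (\<lambda>p. \<phi> p - s n p) \<in> L2T \<and> normT (\<lambda>p. \<phi> p - s n p) \<le> e" if "e > 0" for e
  proof -
    obtain N where N: "\<forall>m\<ge>N. \<forall>n\<ge>N. normT (\<lambda>p. s m p - s n p) < e"
      using Cauchy[OF \<open>e > 0\<close>] by auto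
    have ev: "eventually (\<lambda>i. normT (\<lambda>p. s (r i) p - s n p) \<le> e) sequentially" if "n \<ge> N" for n
      using N that seq_suble[OF r] by (intro eventually_sequentiallyI[of N]) (meson le_trans less_imp_le)
    have "(\<lambda>p. \<phi> p - s n p) \<in> L2T \<and> normT (\<lambda>p. \<phi> p - s n p) \<le> e" if "n \<ge> N" for n
      using L2T_normT_le_of_AE_limit[OF L2T_diff[OF s s] _ lim_diff ev[OF that]] by simp
    then show ?thesis
      by blast
  qed
  obtain N where "(\<lambda>p. \<phi> p - s N p) \<in> L2T"
    using close[of 1] by auto
  from L2T_add[OF this s[of N]] have "\<phi> \<in> L2T"
    by simp
  moreover have "(\<lambda>n. normT (\<lambda>p. s n p - \<phi> p)) \<longlonglongrightarrow> 0"
  proof (rule LIMSEQ_I)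
    fix e :: real
    assume "e > 0"
    then obtain N where N: "\<forall>n\<ge>N. normT (\<lambda>p. \<phi> p - s n p) \<le> e / 2"
      using close[of "e / 2"] by auto
    have "normT (\<lambda>p. s n p - \<phi> p) = normT (\<lambda>p. \<phi> p - s n p)" for n
      unfolding normT_def by (simp add: norm_minus_commute)
    then have "\<forall>n\<ge>N. norm (normT (\<lambda>p. s n p - \<phi> p) - 0) < e"
      using N \<open>e > 0\<close> normT_nonneg by fastforce
    then show "\<exists>N. \<forall>n\<ge>N. norm (normT (\<lambda>p. s n p - \<phi> p) - 0) < e"
      by blast
  qed
  ultimately show ?thesis
    by blast
qed

lemma HT_complete:
  assumes v: "\<And>n. v n \<in> HT"
    and Cauchy: "\<And>e. e > 0 \<Longrightarrow> \<exists>N. \<forall>m\<ge>N. \<forall>n\<ge>N. normH (hdiff (v m) (v n)) < e"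
  shows "\<exists>w\<in>HT. (\<lambda>n. normH (hdiff (v n) w)) \<longlonglongrightarrow> 0"
proof -
  have "\<exists>\<phi>\<in>L2T. (\<lambda>n. normT (\<lambda>p. fst (v n) p - \<phi> p)) \<longlonglongrightarrow> 0"
  proof (rule L2T_complete)
    show "fst (v n) \<in> L2T" for n
      using v HT_iff by blast
    have "normT (\<lambda>p. fst (v m) p - fst (v n) p) \<le> normH (hdiff (v m) (v n))" for m n
      using normT_le_normH by (simp add: hdiff_def)
    then show "\<exists>N. \<forall>m\<ge>N. \<forall>n\<ge>N. normT (\<lambda>p. fst (v m) p - fst (v n) p) < e" if "e > 0" for e
      using Cauchy[OF that] by (meson le_less_trans)
  qed
  then obtain \<phi> where \<phi>: "\<phi> \<in> L2T" "(\<lambda>n. normT (\<lambda>p. fst (v n) p - \<phi> p)) \<longlonglongrightarrow> 0"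
    by blast
  have "Cauchy (\<lambda>n. snd (v n))"
  proof (rule CauchyI)
    have "norm (snd (v m) - snd (v n)) \<le> normH (hdiff (v m) (v n))" for m n
      using norm_le_normH by (simp add: hdiff_def)
    then show "\<exists>N. \<forall>m\<ge>N. \<forall>n\<ge>N. norm (snd (v m) - snd (v n)) < e" if "e > 0" for e
      using Cauchy[OF that] by (meson le_less_trans)
  qed
  then obtain z where z: "(\<lambda>n. snd (v n)) \<longlonglongrightarrow> z"
    using Cauchy_convergent_iff convergent_def by blast
  have "(\<lambda>n. sqrt ((normT (\<lambda>p. fst (v n) p - \<phi> p))^2 + (cmod (snd (v n) - z))^2))
      \<longlonglongrightarrow> sqrt (0^2 + (cmod (z - z))^2)"
    by (intro tendsto_intros \<phi>(2) z)
  then have "(\<lambda>n. normH (hdiff (v n) (\<phi>, z))) \<longlonglongrightarrow> 0"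
    by (simp add: normH_def hdiff_def)
  then show ?thesis
    using \<phi>(1) by (auto simp: HT_iff)
qed

lemma HT_geometric_tail:
  assumes s: "\<And>n. s n \<in> HT" and q: "0 \<le> q" "q < 1"
    and step: "\<And>n. normH (hdiff (s (Suc n)) (s n)) \<le> D * q^n" and "m \<ge> n"
  shows "normH (hdiff (s m) (s n)) \<le> D * q^n / (1 - q)"
proof -
  have D: "D \<ge> 0"
    using step[of 0] normH_nonneg[of "hdiff (s 1) (s 0)"] by simp
  have tail: "normH (hdiff (s (n + k)) (s n)) \<le> D * (q^n - q^(n + k)) / (1 - q)" for k
  proof (induction k)
    case 0
    then show ?case
      by (simp add: normH_hdiff_self)
  next
    case (Suc k)
    have "normH (hdiff (s (n + Suc k)) (s n))
        \<le> normH (hdiff (s (Suc (n + k))) (s (n + k))) + normH (hdiff (s (n + k)) (s n))"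
      using normH_hdiff_triangle[OF s s s] by simp
    also have "\<dots> \<le> D * q^(n + k) + D * (q^n - q^(n + k)) / (1 - q)"
      using step[of "n + k"] Suc by simp
    also have "\<dots> = D * (q^n - q^(n + Suc k)) / (1 - q)"
      using q by (simp add: field_simps)
    finally show ?case .
  qed
  have "normH (hdiff (s m) (s n)) \<le> D * (q^n - q^m) / (1 - q)"
    using tail[of "m - n"] \<open>m \<ge> n\<close> by simp
  also have "\<dots> \<le> D * q^n / (1 - q)"
    using D q by (intro divide_right_mono mult_left_mono) auto
  finally show ?thesis .
qed

lemma HT_geometric_Cauchy:
  assumes s: "\<And>n. s n \<in> HT" and q: "0 \<le> q" "q < 1"
    and step: "\<And>n. normH (hdiff (s (Suc n)) (s n)) \<le> D * q^n" and "e > 0"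
  shows "\<exists>N. \<forall>m\<ge>N. \<forall>n\<ge>N. normH (hdiff (s m) (s n)) < e"
proof -
  note bound = HT_geometric_tail[OF s q step]
  have D: "D \<ge> 0"
    using step[of 0] normH_nonneg[of "hdiff (s 1) (s 0)"] by simp
  have "(\<lambda>n. D * q^n / (1 - q)) \<longlonglongrightarrow> D * 0 / (1 - q)"
    using q by (intro tendsto_intros LIMSEQ_power_zero) auto
  then obtain N where N: "\<And>n. n \<ge> N \<Longrightarrow> norm (D * q^n / (1 - q) - D * 0 / (1 - q)) < e"
    using \<open>e > 0\<close> unfolding LIMSEQ_iff by blast
  have N: "D * q^n / (1 - q) < e" if "n \<ge> N" for n
    using N[OF that] D q by (simp add: abs_mult)
  have "normH (hdiff (s m) (s n)) < e" if "m \<ge> N" "n \<ge> N" for m n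
  proof (cases "m \<ge> n")
    case True
    then show ?thesis
      using bound[OF True] N[OF that(2)] by linarith
  next
    case False
    then show ?thesis
      using bound[where m=n and n=m] N[OF that(1)] normH_hdiff_commute[of "s m" "s n"] by linarith
  qed
  then show ?thesis
    by blast
qed

lemma HT_contraction_fixpoint:
  assumes \<Phi>: "\<And>v. v \<in> HT \<Longrightarrow> \<Phi> v \<in> HT" and q: "0 \<le> q" "q < 1"
    and contraction: "\<And>v w. v \<in> HT \<Longrightarrow> w \<in> HT \<Longrightarrow> normH (hdiff (\<Phi> v) (\<Phi> w)) \<le> q * normH (hdiff v w)"
  obtains w where "w \<in> HT" "normH (hdiff (\<Phi> w) w) = 0"
proof -
  define s where "s n = (\<Phi> ^^ n) ((\<lambda>p. 0), 0)" for n
  have s: "s n \<in> HT" for n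
    by (induction n) (auto simp: s_def HT_zero \<Phi>)
  have s_Suc: "s (Suc n) = \<Phi> (s n)" for n
    by (simp add: s_def)
  have step: "normH (hdiff (s (Suc n)) (s n)) \<le> normH (hdiff (s 1) (s 0)) * q^n" for n
  proof (induction n)
    case (Suc n)
    have "normH (hdiff (s (Suc (Suc n))) (s (Suc n))) \<le> q * normH (hdiff (s (Suc n)) (s n))"
      using contraction[OF s s, of "Suc n" n] by (simp only: s_Suc)
    also have "\<dots> \<le> q * (normH (hdiff (s 1) (s 0)) * q^n)"
      by (rule mult_left_mono[OF Suc.IH q(1)])
    finally show ?case
      by (simp add: ac_simps)
  qed simp
  then obtain w where w: "w \<in> HT" "(\<lambda>n. normH (hdiff (s n) w)) \<longlonglongrightarrow> 0"
    using HT_complete[OF s HT_geometric_Cauchy[OF s q step]] by blast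
  have "normH (hdiff (\<Phi> w) w) \<le> 0"
  proof (rule LIMSEQ_le_const)
    show "(\<lambda>n. q * normH (hdiff (s n) w) + normH (hdiff (s (Suc n)) w)) \<longlonglongrightarrow> 0"
      using tendsto_add[OF tendsto_mult_right_zero[OF w(2)] LIMSEQ_Suc[OF w(2)]] by simp
    have "normH (hdiff (\<Phi> w) w) \<le> q * normH (hdiff (s n) w) + normH (hdiff (s (Suc n)) w)" for n
      using normH_hdiff_triangle[OF \<Phi>[OF w(1)] s w(1), of "Suc n"]
        contraction[OF w(1) s, of n] normH_hdiff_commute[of w "s n"]
      by (simp add: s_Suc)
    then show "\<exists>N. \<forall>n\<ge>N. normH (hdiff (\<Phi> w) w) \<le> q * normH (hdiff (s n) w) + normH (hdiff (s (Suc n)) w)"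
      by blast
  qed
  then show ?thesis
    using that w(1) normH_nonneg[of "hdiff (\<Phi> w) w"] by simp
qed

section \<open>Spectrum and numerical range of bounded symmetric operators\<close>

definition numerical_range :: "(hvec \<Rightarrow> hvec) \<Rightarrow> real set" where
  "numerical_range T = {Re (hinner v (T v)) | v. v \<in> HT \<and> normH v = 1}"

lemma HT_unit_scalar: "((\<lambda>p. 0), 1) \<in> HT" "normH ((\<lambda>p. 0), 1) = 1"
  by (simp_all add: HT_iff L2T_zero normH_def normT_def)

lemma shiftH_eq: "shiftH T c v = hdiff (T v) (hscale c v)"
  by (simp add: shiftH_def hdiff_def hscale_def)

text \<open>Symmetry is only imposed on the real part of the form; nothing more is used.\<close>

locale bounded_symmetric =
  fixes T :: "hvec \<Rightarrow> hvec" and L :: real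
  assumes closed: "v \<in> HT \<Longrightarrow> T v \<in> HT"
    and add: "v \<in> HT \<Longrightarrow> w \<in> HT \<Longrightarrow> T (hadd v w) = hadd (T v) (T w)"
    and scale: "v \<in> HT \<Longrightarrow> T (hscale c v) = hscale c (T v)"
    and bounded: "v \<in> HT \<Longrightarrow> normH (T v) \<le> L * normH v"
    and symmetric: "v \<in> HT \<Longrightarrow> w \<in> HT \<Longrightarrow> Re (hinner v (T w)) = Re (hinner w (T v))"
begin

lemma diff: "v \<in> HT \<Longrightarrow> w \<in> HT \<Longrightarrow> T (hdiff v w) = hdiff (T v) (T w)"
  by (simp add: hdiff_eq_hadd_hscale add scale HT_hscale)

lemma bound_nonneg: "L \<ge> 0"
  using bounded[OF HT_unit_scalar(1)] HT_unit_scalar(2) normH_nonneg[of "T ((\<lambda>p. 0), 1)"] by simp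

lemma abs_Re_form_le:
  assumes "v \<in> HT"
  shows "\<bar>Re (hinner v (T v))\<bar> \<le> L * (normH v)^2"
proof -
  have "\<bar>Re (hinner v (T v))\<bar> \<le> normH v * normH (T v)"
    using abs_Re_le_cmod[of "hinner v (T v)"] hinner_Cauchy_Schwarz[OF assms closed[OF assms]] by linarith
  also have "\<dots> \<le> normH v * (L * normH v)"
    using bounded[OF assms] normH_nonneg by (rule mult_left_mono)
  finally show ?thesis
    by (simp add: power2_eq_square ac_simps)
qed

lemma form_ge_if_normalized:
  assumes lb: "\<And>v. v \<in> HT \<Longrightarrow> normH v = 1 \<Longrightarrow> t \<le> Re (hinner v (T v))" and v: "v \<in> HT"
  shows "t * (normH v)^2 \<le> Re (hinner v (T v))"
proof (cases "normH v = 0")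
  case True
  then show ?thesis
    using abs_Re_form_le[OF v] by simp
next
  case False
  then have n: "normH v > 0"
    using normH_nonneg[of v] by simp
  let ?w = "hscale (complex_of_real (1 / normH v)) v"
  have "t \<le> Re (hinner ?w (T ?w))"
    using n v by (intro lb) (simp_all add: HT_hscale normH_hscale norm_divide)
  also have "\<dots> = Re (hinner v (T v)) / (normH v)^2"
    using v by (simp add: scale hinner_scale_left hinner_scale_right power2_eq_square)
  finally show ?thesis
    using n by (simp add: pos_le_divide_eq)
qed

lemma numerical_range_bounds:
  "numerical_range T \<noteq> {}" "q \<in> numerical_range T \<Longrightarrow> - L \<le> q"
  unfolding numerical_range_def using HT_unit_scalar abs_Re_form_le by fastforce+

lemma bdd_below_numerical_range: "bdd_below (numerical_range T)"
  using numerical_range_bounds(2) by (rule bdd_belowI)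

lemma form_ge_Inf_numerical_range:
  assumes "v \<in> HT"
  shows "Inf (numerical_range T) * (normH v)^2 \<le> Re (hinner v (T v))"
proof (rule form_ge_if_normalized[OF _ assms])
  fix w
  assume "w \<in> HT" "normH w = 1"
  then have "Re (hinner w (T w)) \<in> numerical_range T"
    unfolding numerical_range_def by blast
  then show "Inf (numerical_range T) \<le> Re (hinner w (T w))"
    using bdd_below_numerical_range by (rule cInf_lower)
qed

lemma coercive_normH_le:
  assumes c: "c > 0" and coercive: "\<And>v. v \<in> HT \<Longrightarrow> c * (normH v)^2 \<le> Re (hinner v (T v))"
    and v: "v \<in> HT"
  shows "normH v \<le> (1 / c) * normH (T v)"
proof -
  have "c * (normH v)^2 \<le> normH v * normH (T v)"
    using coercive[OF v] complex_Re_le_cmod[of "hinner v (T v)"] hinner_Cauchy_Schwarz[OF v closed[OF v]]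
    by linarith
  then have "c * normH v \<le> normH (T v)"
    using normH_nonneg[of v] normH_nonneg[of "T v"]
    by (cases "normH v = 0") (simp_all add: power2_eq_square)
  then show ?thesis
    using c by (simp add: field_simps)
qed

text \<open>A step of the Richardson iteration for a coercive operator is a contraction.\<close>

lemma coercive_contraction:
  assumes c: "c > 0" and coercive: "\<And>v. v \<in> HT \<Longrightarrow> c * (normH v)^2 \<le> Re (hinner v (T v))"
    and x: "x \<in> HT"
  defines "\<rho> \<equiv> c / (L + c)^2"
  shows "normH (hadd x (hscale (complex_of_real (- \<rho>)) (T x))) \<le> sqrt (1 - c^2 / (L + c)^2) * normH x"
proof -
  have Lc: "L + c > 0"
    using bound_nonneg c by simp
  have \<rho>: "\<rho> > 0"
    using c Lc by (simp add: \<rho>_def)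
  have cL: "c^2 / (L + c)^2 \<le> 1"
    using bound_nonneg c by (simp add: power_mono)
  have "(normH (hadd x (hscale (complex_of_real (- \<rho>)) (T x))))^2
      = (normH x)^2 - 2 * \<rho> * Re (hinner x (T x)) + \<rho>^2 * (normH (T x))^2"
    using normH_hadd_hscale_sq[OF x closed[OF x], of "- \<rho>"] by simp
  also have "\<dots> \<le> (normH x)^2 - 2 * \<rho> * (c * (normH x)^2) + \<rho>^2 * ((L + c) * normH x)^2"
  proof -
    have "normH (T x) \<le> (L + c) * normH x"
      using bounded[OF x] c normH_nonneg[of x] by (smt (verit) mult_right_mono)
    then have "(normH (T x))^2 \<le> ((L + c) * normH x)^2"
      using normH_nonneg by (intro power_mono) auto
    then show ?thesis
      using coercive[OF x] \<rho> by (smt (verit) mult_left_mono zero_le_power2)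
  qed
  also have "\<dots> = (1 - \<rho> * c) * (normH x)^2"
  proof -
    have "\<rho>^2 * ((L + c) * normH x)^2 = (\<rho> * c) * (normH x)^2"
      using Lc by (simp add: \<rho>_def power2_eq_square)
    then show ?thesis
      by (simp add: algebra_simps)
  qed
  also have "\<dots> = (sqrt (1 - c^2 / (L + c)^2) * normH x)^2"
  proof -
    have "\<rho> * c = c^2 / (L + c)^2"
      by (simp add: \<rho>_def power2_eq_square)
    then show ?thesis
      using cL by (simp add: power_mult_distrib)
  qed
  finally show ?thesis
    using cL normH_nonneg[of x] by (auto intro: power2_le_imp_le)
qed

lemma coercive_surjective:
  assumes c: "c > 0" and coercive: "\<And>v. v \<in> HT \<Longrightarrow> c * (normH v)^2 \<le> Re (hinner v (T v))"
    and g: "g \<in> HT"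
  obtains w where "w \<in> HT" "eqH (T w) g"
proof -
  define \<rho> where "\<rho> = c / (L + c)^2"
  define q where "q = sqrt (1 - c^2 / (L + c)^2)"
  define \<Phi> where "\<Phi> v = hadd v (hscale (complex_of_real \<rho>) (hdiff g (T v)))" for v
  have \<rho>: "\<rho> > 0"
    using c bound_nonneg by (simp add: \<rho>_def)
  have q: "0 \<le> q" "q < 1"
    using c bound_nonneg by (auto simp: q_def power_mono)
  have \<Phi>_HT: "\<Phi> v \<in> HT" if "v \<in> HT" for v
    using that g by (simp add: \<Phi>_def HT_hadd HT_hscale HT_hdiff closed)
  have contraction: "normH (hdiff (\<Phi> v) (\<Phi> w)) \<le> q * normH (hdiff v w)" if "v \<in> HT" "w \<in> HT" for v w
  proof -
    have "hdiff (\<Phi> v) (\<Phi> w) = hadd (hdiff v w) (hscale (complex_of_real (- \<rho>)) (T (hdiff v w)))"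
      unfolding diff[OF that] by (simp add: \<Phi>_def hdiff_def hadd_def hscale_def fun_eq_iff algebra_simps)
    then show ?thesis
      using coercive_contraction[OF c coercive HT_hdiff[OF that]] by (simp add: \<rho>_def q_def)
  qed
  obtain w where w: "w \<in> HT" "normH (hdiff (\<Phi> w) w) = 0"
    using HT_contraction_fixpoint[of \<Phi> q] \<Phi>_HT q contraction by blast
  have "hdiff (\<Phi> w) w = hscale (complex_of_real \<rho>) (hdiff g (T w))"
    by (simp add: \<Phi>_def hdiff_def hadd_def hscale_def)
  then have "normH (hdiff g (T w)) = 0"
    using w g \<rho> by (simp add: normH_hscale HT_hdiff closed)
  then have "eqH (T w) g"
    using eqH_if_normH_hdiff_eq_0[OF closed[OF w(1)] g] normH_hdiff_commute by metis
  then show ?thesis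
    using that w(1) by blast
qed

lemma bounded_symmetric_shift: "bounded_symmetric (shiftH T (complex_of_real t)) (L + \<bar>t\<bar>)"
proof
  fix v w c
  assume v: "v \<in> HT" and w: "w \<in> HT"
  note shift = shiftH_eq[of T]
  show "shiftH T (complex_of_real t) v \<in> HT"
    unfolding shift using v by (simp add: HT_hdiff HT_hscale closed)
  show "shiftH T (complex_of_real t) (hadd v w)
      = hadd (shiftH T (complex_of_real t) v) (shiftH T (complex_of_real t) w)"
    unfolding shift add[OF v w] by (simp add: hdiff_def hadd_def hscale_def algebra_simps)
  show "shiftH T (complex_of_real t) (hscale c v) = hscale c (shiftH T (complex_of_real t) v)"
    unfolding shift scale[OF v] by (simp add: hdiff_def hscale_def algebra_simps)
  have "normH (shiftH T (complex_of_real t) v) \<le> normH (T v) + normH (hscale (complex_of_real t) v)"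
    unfolding shift using v by (intro normH_hdiff_le closed HT_hscale)
  also have "\<dots> \<le> (L + \<bar>t\<bar>) * normH v"
    using bounded[OF v] v by (simp add: normH_hscale algebra_simps)
  finally show "normH (shiftH T (complex_of_real t) v) \<le> (L + \<bar>t\<bar>) * normH v" .
  show "Re (hinner v (shiftH T (complex_of_real t) w)) = Re (hinner w (shiftH T (complex_of_real t) v))"
    unfolding shift using v w symmetric[OF v w] Re_hinner_swap[of v w]
    by (simp add: hinner_diff_right hinner_scale_right HT_hscale closed)
qed

lemma Re_form_shift:
  "v \<in> HT \<Longrightarrow> Re (hinner v (shiftH T (complex_of_real t) v)) = Re (hinner v (T v)) - t * (normH v)^2"
  by (simp add: shiftH_eq hinner_diff_right hinner_scale_right HT_hscale closed hinner_self)

lemma form_Cauchy_Schwarz: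
  assumes pos: "\<And>v. v \<in> HT \<Longrightarrow> 0 \<le> Re (hinner v (T v))" and x: "x \<in> HT" and y: "y \<in> HT"
  shows "(Re (hinner x (T y)))^2 \<le> Re (hinner x (T x)) * Re (hinner y (T y))"
proof (rule quadratic_nonneg_imp_discrim)
  fix t :: real
  let ?z = "hadd x (hscale (complex_of_real t) y)"
  have "hinner ?z (T ?z) = hinner x (T x) + complex_of_real t * hinner x (T y)
      + (complex_of_real t * hinner y (T x) + complex_of_real t * (complex_of_real t * hinner y (T y)))"
    using x y by (simp add: add scale hinner_add_left hinner_add_right hinner_scale_left
        hinner_scale_right HT_hscale HT_hadd closed distrib_left)
  then have "Re (hinner ?z (T ?z)) = Re (hinner x (T x)) + 2 * t * Re (hinner x (T y)) + t^2 * Re (hinner y (T y))"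
    using symmetric[OF x y] by (simp add: power2_eq_square algebra_simps)
  then show "0 \<le> Re (hinner x (T x)) + 2 * t * Re (hinner x (T y)) + t^2 * Re (hinner y (T y))"
    using pos[of ?z] x y by (simp add: HT_hadd HT_hscale)
qed (use pos y in auto)

text \<open>Approximate eigenvectors: for positive T, the Cauchy--Schwarz inequality for the form
  gives \<open>\<parallel>T v\<parallel>\<^sup>4 \<le> \<langle>v, T v\<rangle> \<langle>T v, T (T v)\<rangle>\<close>, so T v is small whenever \<open>\<langle>v, T v\<rangle>\<close> is.\<close>

lemma not_bounded_below_if_form_inf_0:
  assumes pos: "\<And>v. v \<in> HT \<Longrightarrow> 0 \<le> Re (hinner v (T v))"
    and small: "\<And>\<delta>. \<delta> > 0 \<Longrightarrow> \<exists>v\<in>HT. normH v = 1 \<and> Re (hinner v (T v)) < \<delta>"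
  shows "\<not> (\<exists>C. \<forall>v\<in>HT. normH v \<le> C * normH (T v))"
proof
  assume "\<exists>C. \<forall>v\<in>HT. normH v \<le> C * normH (T v)"
  then obtain C where C: "\<And>v. v \<in> HT \<Longrightarrow> normH v \<le> C * normH (T v)"
    by blast
  define \<delta> where "\<delta> = 1 / (C^2 * L + 1)"
  have CL: "C^2 * L \<ge> 0"
    using bound_nonneg by simp
  have \<delta>: "\<delta> > 0"
    using CL by (simp add: \<delta>_def add_pos_nonneg)
  obtain v where v: "v \<in> HT" "normH v = 1" "Re (hinner v (T v)) < \<delta>"
    using small[OF \<delta>] by blast
  let ?y = "T v"
  have y: "?y \<in> HT"
    using v closed by blast
  have "((normH ?y)^2)^2 = (Re (hinner v (T ?y)))^2"
    using symmetric[OF v(1) y] by (simp add: hinner_self)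
  also have "\<dots> \<le> Re (hinner v (T v)) * Re (hinner ?y (T ?y))"
    by (rule form_Cauchy_Schwarz[OF pos v(1) y])
  also have "\<dots> \<le> \<delta> * (L * (normH ?y)^2)"
    using v(3) abs_Re_form_le[OF y] pos[OF v(1)] pos[OF y] by (intro mult_mono) auto
  finally have le: "(normH ?y)^2 * (normH ?y)^2 \<le> (\<delta> * L) * (normH ?y)^2"
    by (simp add: power2_eq_square ac_simps)
  have "(normH ?y)^2 \<le> \<delta> * L"
  proof (cases "normH ?y = 0")
    case True
    then show ?thesis
      using \<delta> bound_nonneg by simp
  next
    case False
    then show ?thesis
      using mult_right_le_imp_le[OF le] by simp
  qed
  moreover have "1 \<le> (C * normH ?y)^2"
    using C[OF v(1)] v(2) by simp
  ultimately have "1 \<le> C^2 * (\<delta> * L)"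
    by (smt (verit) mult_left_mono power_mult_distrib zero_le_power2)
  also have "\<dots> < 1"
    using CL by (simp add: \<delta>_def field_simps)
  finally show False
    by simp
qed

lemma real_notin_spectrum:
  assumes c: "c > 0" and coercive: "\<And>v. v \<in> HT \<Longrightarrow> (t + c) * (normH v)^2 \<le> Re (hinner v (T v))"
  shows "complex_of_real t \<notin> opspectrum T"
proof -
  interpret S: bounded_symmetric "shiftH T (complex_of_real t)" "L + \<bar>t\<bar>"
    by (rule bounded_symmetric_shift)
  have "c * (normH v)^2 \<le> Re (hinner v (shiftH T (complex_of_real t) v))" if "v \<in> HT" for v
    using coercive[OF that] by (simp add: Re_form_shift[OF that] algebra_simps)
  then have "\<forall>v\<in>HT. normH v \<le> (1 / c) * normH (shiftH T (complex_of_real t) v)"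
    and "\<forall>g\<in>HT. \<exists>v\<in>HT. eqH (shiftH T (complex_of_real t) v) g"
    using S.coercive_normH_le[OF c] S.coercive_surjective[OF c] by blast+
  then show ?thesis
    unfolding opspectrum_def by blast
qed

lemma real_in_spectrum:
  assumes lb: "\<And>v. v \<in> HT \<Longrightarrow> t * (normH v)^2 \<le> Re (hinner v (T v))"
    and small: "\<And>\<delta>. \<delta> > 0 \<Longrightarrow> \<exists>v\<in>HT. normH v = 1 \<and> Re (hinner v (T v)) < t + \<delta>"
  shows "complex_of_real t \<in> opspectrum T"
proof -
  interpret S: bounded_symmetric "shiftH T (complex_of_real t)" "L + \<bar>t\<bar>"
    by (rule bounded_symmetric_shift)
  have "\<not> (\<exists>C. \<forall>v\<in>HT. normH v \<le> C * normH (shiftH T (complex_of_real t) v))"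
  proof (rule S.not_bounded_below_if_form_inf_0)
    show "0 \<le> Re (hinner v (shiftH T (complex_of_real t) v))" if "v \<in> HT" for v
      using lb[OF that] by (simp add: Re_form_shift[OF that])
    show "\<exists>v\<in>HT. normH v = 1 \<and> Re (hinner v (shiftH T (complex_of_real t) v)) < \<delta>" if "\<delta> > 0" for \<delta>
      using small[OF that] Re_form_shift by fastforce
  qed
  then show ?thesis
    unfolding opspectrum_def by blast
qed

lemma Inf_numerical_range_in_spectrum: "complex_of_real (Inf (numerical_range T)) \<in> opspectrum T"
proof (rule real_in_spectrum)
  show "Inf (numerical_range T) * (normH v)^2 \<le> Re (hinner v (T v))" if "v \<in> HT" for v
    using that by (rule form_ge_Inf_numerical_range)
  show "\<exists>v\<in>HT. normH v = 1 \<and> Re (hinner v (T v)) < Inf (numerical_range T) + \<delta>" if \<delta>: "\<delta> > 0" for \<delta>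
  proof -
    have "Inf (numerical_range T) < Inf (numerical_range T) + \<delta>"
      using \<delta> by simp
    then obtain q where "q \<in> numerical_range T" "q < Inf (numerical_range T) + \<delta>"
      using cInf_less_iff[OF numerical_range_bounds(1) bdd_below_numerical_range] by blast
    then show ?thesis
      unfolding numerical_range_def by blast
  qed
qed

lemma Inf_numerical_range_le_spectrum:
  assumes "complex_of_real t \<in> opspectrum T"
  shows "Inf (numerical_range T) \<le> t"
proof (rule ccontr)
  assume "\<not> Inf (numerical_range T) \<le> t"
  then have "Inf (numerical_range T) - t > 0"
    by simp
  moreover have "(t + (Inf (numerical_range T) - t)) * (normH v)^2 \<le> Re (hinner v (T v))" if "v \<in> HT" for v
    using form_ge_Inf_numerical_range[OF that] by simp
  ultimately show False
    using real_notin_spectrum assms by blast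
qed

end

lemma Inf_spectra_eq_Inf_numerical_ranges:
  assumes "K \<noteq> {}" and T: "\<And>k. k \<in> K \<Longrightarrow> bounded_symmetric (T k) L"
  shows "Inf {t. \<exists>k\<in>K. complex_of_real t \<in> opspectrum (T k)} = Inf (\<Union>k\<in>K. numerical_range (T k))"
    (is "Inf ?S = Inf ?R")
proof -
  have R: "?R \<noteq> {}" "bdd_below ?R"
    using assms bounded_symmetric.numerical_range_bounds[OF T] by (auto intro!: bdd_belowI[of _ "- L"])
  have in_S: "Inf (numerical_range (T k)) \<in> ?S" if "k \<in> K" for k
    using bounded_symmetric.Inf_numerical_range_in_spectrum[OF T[OF that]] that by blast
  have lower: "Inf ?R \<le> t" if t: "t \<in> ?S" for t
  proof -
    obtain k where k: "k \<in> K" "complex_of_real t \<in> opspectrum (T k)"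
      using t by blast
    interpret bounded_symmetric "T k" L
      using T[OF k(1)] .
    have "Inf ?R \<le> Inf (numerical_range (T k))"
      using cInf_superset_mono[OF numerical_range_bounds(1) R(2)] k(1) by blast
    also have "\<dots> \<le> t"
      by (rule Inf_numerical_range_le_spectrum[OF k(2)])
    finally show ?thesis .
  qed
  have S: "?S \<noteq> {}" "bdd_below ?S"
    using in_S assms(1) lower unfolding bdd_below_def by blast+
  show ?thesis
  proof (rule antisym)
    show "Inf ?R \<le> Inf ?S"
      using cInf_greatest[OF S(1) lower] .
    show "Inf ?S \<le> Inf ?R"
    proof (rule cInf_greatest[OF R(1)])
      fix r
      assume "r \<in> ?R"
      then obtain k where k: "k \<in> K" "r \<in> numerical_range (T k)"
        by blast
      have "Inf ?S \<le> Inf (numerical_range (T k))"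
        using cInf_lower[OF in_S[OF k(1)] S(2)] .
      also have "\<dots> \<le> r"
        using cInf_lower[OF k(2) bounded_symmetric.bdd_below_numerical_range[OF T[OF k(1)]]] .
      finally show "Inf ?S \<le> r" .
    qed
  qed
qed

section \<open>Absolutely convergent Fourier series\<close>

lemma ehat_measurable[measurable]: "ehat x \<in> borel_measurable lborel"
proof -
  have "(\<lambda>p. ehat x p) \<in> borel_measurable borel"
    unfolding ehat_def dotp_def by (intro borel_measurable_continuous_onI continuous_intros)
  then show ?thesis
    by simp
qed

lemma norm_ehat[simp]: "cmod (ehat x p) = 1"
  unfolding ehat_def by (rule norm_exp_i_times)

lemma ehat_L2T: "ehat x \<in> L2T"
  by (rule L2T_bounded[where B=1]) auto

lemma normT_ehat: "normT (ehat x) = 1"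
proof -
  have "normT (ehat x) = normT (\<lambda>p. 1)"
    unfolding normT_def by simp
  then show ?thesis
    using normT_one by simp
qed

definition fourier_coeff :: "(mom \<Rightarrow> complex) \<Rightarrow> site \<Rightarrow> complex" where
  "fourier_coeff \<phi> x = ipT (ehat x) \<phi>"

lemma norm_fourier_coeff_le: "\<phi> \<in> L2T \<Longrightarrow> cmod (fourier_coeff \<phi> x) \<le> normT \<phi>"
  using ipT_Cauchy_Schwarz[OF ehat_L2T] by (simp add: fourier_coeff_def normT_ehat)

definition fourier_series :: "(site \<Rightarrow> complex) \<Rightarrow> mom \<Rightarrow> complex" where
  "fourier_series a p = (\<Sum>\<^sub>\<infinity>x. a x * ehat x p)"

lemma abs_summable_fourier_terms:
  "(\<lambda>x. cmod (a x)) summable_on UNIV \<Longrightarrow> (\<lambda>x. cmod (a x * ehat x p)) summable_on UNIV"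
  by (simp add: norm_mult)

lemma summable_fourier_terms:
  "(\<lambda>x. cmod (a x)) summable_on UNIV \<Longrightarrow> (\<lambda>x. a x * ehat x p) summable_on UNIV"
  by (rule abs_summable_summable[OF abs_summable_fourier_terms])

lemma norm_fourier_series_le:
  "(\<lambda>x. cmod (a x)) summable_on UNIV \<Longrightarrow> cmod (fourier_series a p) \<le> (\<Sum>\<^sub>\<infinity>x. cmod (a x))"
  unfolding fourier_series_def
  using norm_infsum_bound[OF abs_summable_fourier_terms] by (simp add: norm_mult)

lemma fourier_series_add:
  "(\<lambda>x. cmod (a x)) summable_on UNIV \<Longrightarrow> (\<lambda>x. cmod (b x)) summable_on UNIV
    \<Longrightarrow> fourier_series (\<lambda>x. a x + b x) p = fourier_series a p + fourier_series b p"
  unfolding fourier_series_def distrib_right by (intro infsum_add summable_fourier_terms)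

lemma fourier_series_mult:
  "(\<lambda>x. cmod (a x)) summable_on UNIV \<Longrightarrow> fourier_series (\<lambda>x. c * a x) p = c * fourier_series a p"
  unfolding fourier_series_def mult.assoc by (intro infsum_cmult_right summable_fourier_terms)

definition site_enum :: "nat \<Rightarrow> site" where
  "site_enum = from_nat_into UNIV"

lemma sums_site_enum:
  fixes f :: "site \<Rightarrow> 'a::real_normed_vector"
  assumes "f summable_on UNIV"
  shows "(\<lambda>n. f (site_enum n)) sums infsum f UNIV"
proof -
  have "bij_betw site_enum UNIV UNIV"
    unfolding site_enum_def
    by (rule bij_betw_from_nat_into) (auto simp: infinite_UNIV_char_0 finite_prod)
  then show ?thesis
    using has_sum_reindex_bij_betw[of site_enum UNIV UNIV f] assms
    by (simp add: has_sum_imp_sums o_def)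
qed

lemma fourier_series_measurable:
  assumes "(\<lambda>x. cmod (a x)) summable_on UNIV"
  shows "fourier_series a \<in> borel_measurable lborel"
proof (rule borel_measurable_LIMSEQ_metric)
  show "(\<lambda>p. \<Sum>n<N. a (site_enum n) * ehat (site_enum n) p) \<in> borel_measurable lborel" for N
    by measurable
  show "(\<lambda>N. \<Sum>n<N. a (site_enum n) * ehat (site_enum n) p) \<longlonglongrightarrow> fourier_series a p" for p
    using sums_site_enum[OF summable_fourier_terms[OF assms]] unfolding fourier_series_def sums_def .
qed

lemma fourier_series_L2T: "(\<lambda>x. cmod (a x)) summable_on UNIV \<Longrightarrow> fourier_series a \<in> L2T"
  by (rule L2T_bounded[OF fourier_series_measurable norm_fourier_series_le])

text \<open>The series converges absolutely and uniformly, so it may be integrated term by term.\<close>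

lemma ipT_fourier_series:
  assumes a: "(\<lambda>x. cmod (a x)) summable_on UNIV" and \<psi>: "\<psi> \<in> L2T"
  shows "ipT \<psi> (fourier_series a) = (\<Sum>\<^sub>\<infinity>x. a x * ipT \<psi> (ehat x))"
proof -
  let ?F = "\<lambda>n p. a (site_enum n) * (cnj (\<psi> p) * ehat (site_enum n) p)"
  have norms: "summable (\<lambda>n. cmod (a (site_enum n)))"
    using sums_site_enum[OF a] by (simp add: sums_iff)
  have "(\<lambda>n. ?F n p) sums (cnj (\<psi> p) * fourier_series a p)" for p
    using sums_mult[OF sums_site_enum[OF summable_fourier_terms[OF a, of p]], of "cnj (\<psi> p)"]
    unfolding fourier_series_def by (simp add: ac_simps)
  then have "integral\<^sup>L torus (\<lambda>p. cnj (\<psi> p) * fourier_series a p) = integral\<^sup>L torus (\<lambda>p. \<Sum>n. ?F n p)"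
    by (simp add: sums_iff)
  also have "\<dots> = (\<Sum>n. integral\<^sup>L torus (?F n))"
  proof (rule integral_suminf)
    show "integrable torus (?F n)" for n
      using L2T_integrable_cnj_mult[OF \<psi> ehat_L2T] by simp
    show "AE p in torus. summable (\<lambda>n. norm (?F n p))"
      using norms by (intro AE_I2) (simp add: norm_mult summable_mult2)
    show "summable (\<lambda>n. integral\<^sup>L torus (\<lambda>p. norm (?F n p)))"
      using norms by (simp add: norm_mult summable_mult2)
  qed
  finally have lhs: "ipT \<psi> (fourier_series a) = complex_of_real haar_density * (\<Sum>n. integral\<^sup>L torus (?F n))"
    unfolding ipT_eq_integral by simp
  have "cmod (a x * ipT \<psi> (ehat x)) \<le> cmod (a x) * normT \<psi>" for x
    using ipT_Cauchy_Schwarz[OF \<psi> ehat_L2T, of x] by (simp add: norm_mult normT_ehat mult_left_mono)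
  then have "(\<lambda>x. cmod (a x * ipT \<psi> (ehat x))) summable_on UNIV"
    by (intro summable_on_comparison_test[OF summable_on_cmult_left[OF a, of "normT \<psi>"]]) auto
  then have "(\<lambda>n. a (site_enum n) * ipT \<psi> (ehat (site_enum n))) sums (\<Sum>\<^sub>\<infinity>x. a x * ipT \<psi> (ehat x))"
    by (rule sums_site_enum[OF abs_summable_summable])
  moreover have "a (site_enum n) * ipT \<psi> (ehat (site_enum n)) = complex_of_real haar_density * integral\<^sup>L torus (?F n)" for n
    using integral_mult_right_zero[of torus "a (site_enum n)" "\<lambda>p. cnj (\<psi> p) * ehat (site_enum n) p"]
    unfolding ipT_eq_integral by (simp only: mult.left_commute)
  ultimately have sums_rhs: "(\<lambda>n. complex_of_real haar_density * integral\<^sup>L torus (?F n)) sums (\<Sum>\<^sub>\<infinity>x. a x * ipT \<psi> (ehat x))"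
    by simp
  then have "(\<lambda>n. integral\<^sup>L torus (?F n)) sums ((\<Sum>\<^sub>\<infinity>x. a x * ipT \<psi> (ehat x)) / complex_of_real haar_density)"
    using sums_divide[OF sums_rhs, of "complex_of_real haar_density"] haar_density_pos by simp
  then show ?thesis
    unfolding lhs using haar_density_pos by (simp add: sums_iff)
qed

lemma fhat_even_real:
  assumes "\<And>x. w (- x) = w x"
  shows "fhat w k = complex_of_real (Re (fhat w k))"
proof -
  let ?F = "\<lambda>x. exp (\<i> * complex_of_real (dotp k x)) * complex_of_real (w x)"
  have "cnj (fhat w k) = infsum (\<lambda>x. cnj (?F x)) UNIV"
    unfolding fhat_def by (rule infsum_cnj[symmetric])
  also have "(\<lambda>x. cnj (?F x)) = ?F \<circ> uminus"
    by (rule ext) (simp add: exp_cnj assms dotp_def algebra_simps)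
  also have "infsum (?F \<circ> uminus) UNIV = infsum ?F (range uminus)"
    by (rule infsum_reindex[symmetric]) simp
  also have "range uminus = (UNIV :: site set)"
    by (simp add: surj_def)
  finally show ?thesis
    unfolding fhat_def by (simp add: complex_eq_iff)
qed

lemma norm_fhat_le:
  "(\<lambda>x. \<bar>w x\<bar>) summable_on UNIV \<Longrightarrow> cmod (fhat w k) \<le> (\<Sum>\<^sub>\<infinity>x. \<bar>w x\<bar>)"
  unfolding fhat_def
  using norm_infsum_bound[of "\<lambda>x. exp (\<i> * complex_of_real (dotp k x)) * complex_of_real (w x)" UNIV]
  by (simp add: norm_mult)

definition modulate :: "(site \<Rightarrow> real) \<Rightarrow> mom \<Rightarrow> site \<Rightarrow> complex" where
  "modulate w k x = exp (\<i> * complex_of_real (dotp k x)) * complex_of_real (w x)"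

lemma abs_summable_modulate:
  "(\<lambda>x. \<bar>w x\<bar>) summable_on UNIV \<Longrightarrow> (\<lambda>x. cmod (modulate w k x)) summable_on UNIV"
  by (simp add: modulate_def norm_mult)

lemma infsum_norm_modulate: "(\<Sum>\<^sub>\<infinity>x. cmod (modulate w k x)) = (\<Sum>\<^sub>\<infinity>x. \<bar>w x\<bar>)"
  by (simp add: modulate_def norm_mult)

lemma fhat_add_eq_fourier_series: "fhat w (k + p) = fourier_series (modulate w k) p"
  unfolding fhat_def fourier_series_def modulate_def ehat_def dotp_def
  by (rule infsum_cong) (simp add: algebra_simps exp_add)

section \<open>The operator A(U,k)\<close>

lemma ffun_measurable: "(\<lambda>p. complex_of_real (ffun \<epsilon> k p)) \<in> borel_measurable lborel"
proof -
  have "(\<lambda>p. complex_of_real (ffun \<epsilon> k p)) \<in> borel_measurable borel"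
    unfolding ffun_def cos2_def by (intro borel_measurable_continuous_onI continuous_intros)
  then show ?thesis
    by simp
qed

lemma abs_ffun_le: "cmod (complex_of_real (ffun \<epsilon> k p)) \<le> 8 * \<bar>\<epsilon>\<bar>"
proof -
  have "\<bar>4 - cos2 (p + k) - cos2 p\<bar> \<le> 8"
    unfolding cos2_def using abs_cos_le_one[of "fst (p + k)"] abs_cos_le_one[of "snd (p + k)"]
      abs_cos_le_one[of "fst p"] abs_cos_le_one[of "snd p"] by linarith
  then show ?thesis
    unfolding norm_of_real ffun_def abs_mult by (simp add: mult_left_mono mult.commute)
qed

lemma abs_bfun_le: "\<bar>bfun \<epsilon> hb k\<bar> \<le> 4 * (\<bar>hb\<bar> * \<bar>\<epsilon>\<bar>)"
proof -
  have "\<bar>2 - cos2 k\<bar> \<le> 4"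
    unfolding cos2_def using abs_cos_le_one[of "fst k"] abs_cos_le_one[of "snd k"] by linarith
  then show ?thesis
    by (simp add: bfun_def abs_mult mult_left_mono ac_simps)
qed

lemma bfun_0: "bfun \<epsilon> hb 0 = 0"
  by (simp add: bfun_def cos2_def)

locale lattice_model =
  fixes \<epsilon> hb :: real and u \<upsilon> p1 p2 :: "site \<Rightarrow> real"
  assumes u_summable: "(\<lambda>x. \<bar>u x\<bar>) summable_on UNIV"
    and \<upsilon>_summable: "(\<lambda>x. \<bar>\<upsilon> x\<bar>) summable_on UNIV"
    and \<upsilon>_even: "\<And>x. \<upsilon> (- x) = \<upsilon> x"
    and p1_summable: "(\<lambda>x. \<bar>p1 x\<bar>) summable_on UNIV"
    and p2_summable: "(\<lambda>x. \<bar>p2 x\<bar>) summable_on UNIV"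
begin

abbreviation A :: "real \<Rightarrow> mom \<Rightarrow> hvec \<Rightarrow> hvec" where
  "A U k \<equiv> Aop \<epsilon> hb u \<upsilon> p1 p2 U k"

abbreviation d :: "mom \<Rightarrow> mom \<Rightarrow> complex" where
  "d k \<equiv> dfun p1 p2 k"

definition u_coeffs :: "(mom \<Rightarrow> complex) \<Rightarrow> site \<Rightarrow> complex" where
  "u_coeffs \<phi> x = complex_of_real (u x) * fourier_coeff \<phi> x"

definition vhat :: "mom \<Rightarrow> real" where
  "vhat k = Re (fhat \<upsilon> k)"

definition l1_u :: real where
  "l1_u = (\<Sum>\<^sub>\<infinity>x. \<bar>u x\<bar>)"

definition l1_\<upsilon> :: real where
  "l1_\<upsilon> = (\<Sum>\<^sub>\<infinity>x. \<bar>\<upsilon> x\<bar>)"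

definition l1_p :: real where
  "l1_p = (\<Sum>\<^sub>\<infinity>x. \<bar>p1 x\<bar>) + (\<Sum>\<^sub>\<infinity>x. \<bar>p2 x\<bar>)"

lemma l1_nonneg: "l1_u \<ge> 0" "l1_\<upsilon> \<ge> 0" "l1_p \<ge> 0"
  unfolding l1_u_def l1_\<upsilon>_def l1_p_def by (simp_all add: infsum_nonneg)

lemma fhat_\<upsilon>: "fhat \<upsilon> k = complex_of_real (vhat k)"
  unfolding vhat_def by (rule fhat_even_real) (rule \<upsilon>_even)

lemma abs_vhat_le: "\<bar>vhat k\<bar> \<le> l1_\<upsilon>"
  using norm_fhat_le[OF \<upsilon>_summable, of k] unfolding fhat_\<upsilon> l1_\<upsilon>_def by simp

lemma d_eq: "d k = (\<lambda>p. fourier_series (modulate p1 k) p + fourier_series (modulate p2 ((1/2) *\<^sub>R k)) p)"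
  unfolding dfun_def by (simp add: fhat_add_eq_fourier_series)

lemma d_L2T: "d k \<in> L2T"
  unfolding d_eq by (intro L2T_add fourier_series_L2T abs_summable_modulate p1_summable p2_summable)

lemma normT_d_le: "normT (d k) \<le> l1_p"
proof (rule normT_bounded[OF d_L2T])
  fix p
  have "cmod (d k p) \<le> cmod (fourier_series (modulate p1 k) p) + cmod (fourier_series (modulate p2 ((1/2) *\<^sub>R k)) p)"
    unfolding d_eq by (rule norm_triangle_ineq)
  also have "\<dots> \<le> l1_p"
    using norm_fourier_series_le[OF abs_summable_modulate[OF p1_summable], of k p]
      norm_fourier_series_le[OF abs_summable_modulate[OF p2_summable], of "(1/2) *\<^sub>R k" p]
    unfolding l1_p_def infsum_norm_modulate by linarith
  finally show "cmod (d k p) \<le> l1_p" .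
qed

lemma abs_summable_u_coeffs:
  assumes "\<phi> \<in> L2T"
  shows "(\<lambda>x. cmod (u_coeffs \<phi> x)) summable_on UNIV"
proof -
  have "norm (cmod (u_coeffs \<phi> x)) \<le> \<bar>u x\<bar> * normT \<phi>" for x
    using norm_fourier_coeff_le[OF assms, of x] by (simp add: u_coeffs_def norm_mult mult_left_mono)
  then show ?thesis
    by (intro summable_on_comparison_test[OF summable_on_cmult_left[OF u_summable, of "normT \<phi>"]]) auto
qed

lemma infsum_u_coeffs_le:
  assumes "\<phi> \<in> L2T"
  shows "(\<Sum>\<^sub>\<infinity>x. cmod (u_coeffs \<phi> x)) \<le> l1_u * normT \<phi>"
proof -
  have "(\<Sum>\<^sub>\<infinity>x. cmod (u_coeffs \<phi> x)) \<le> (\<Sum>\<^sub>\<infinity>x. \<bar>u x\<bar> * normT \<phi>)"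
    using norm_fourier_coeff_le[OF assms]
    by (intro infsum_mono abs_summable_u_coeffs[OF assms] summable_on_cmult_left u_summable)
       (simp add: u_coeffs_def norm_mult mult_left_mono)
  also have "\<dots> = l1_u * normT \<phi>"
    unfolding l1_u_def by (rule infsum_cmult_left) (use u_summable in auto)
  finally show ?thesis .
qed

lemma Aop_eq: "A U k v =
   ((\<lambda>p. complex_of_real (ffun \<epsilon> k p) * fst v p + fourier_series (u_coeffs (fst v)) p
      + complex_of_real U * (fourier_coeff (fst v) 0 * ehat 0 p) + complex_of_real (vhat k) * snd v * d k p),
    complex_of_real (vhat k) * ipT (d k) (fst v) + complex_of_real (bfun \<epsilon> hb k) * snd v)"
  unfolding Aop_def A11_def projT_def fourier_series_def u_coeffs_def fourier_coeff_def fhat_\<upsilon>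
  by (simp add: mult.assoc)

lemma Aop_parts_L2T:
  assumes \<phi>: "\<phi> \<in> L2T"
  shows "(\<lambda>p. complex_of_real (ffun \<epsilon> k p) * \<phi> p) \<in> L2T"
    and "fourier_series (u_coeffs \<phi>) \<in> L2T"
    and "(\<lambda>p. complex_of_real U * (fourier_coeff \<phi> 0 * ehat 0 p)) \<in> L2T"
    and "(\<lambda>p. complex_of_real (vhat k) * z * d k p) \<in> L2T"
  using L2T_mult_bounded(1)[OF ffun_measurable abs_ffun_le \<phi>]
    fourier_series_L2T[OF abs_summable_u_coeffs[OF \<phi>]]
    L2T_mult[OF ehat_L2T, of "complex_of_real U * fourier_coeff \<phi> 0" 0]
    L2T_mult[OF d_L2T, of "complex_of_real (vhat k) * z" k]
  by (simp_all add: mult.assoc)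

lemma Aop_HT: "v \<in> HT \<Longrightarrow> A U k v \<in> HT"
  using Aop_parts_L2T[of "fst v"] unfolding Aop_eq HT_iff by (simp add: L2T_add)

lemma Aop_hadd:
  assumes "v \<in> HT" "w \<in> HT"
  shows "A U k (hadd v w) = hadd (A U k v) (A U k w)"
proof -
  have \<phi>: "fst v \<in> L2T" and \<psi>: "fst w \<in> L2T"
    using assms HT_iff by blast+
  have "u_coeffs (\<lambda>p. fst v p + fst w p) = (\<lambda>x. u_coeffs (fst v) x + u_coeffs (fst w) x)"
    using ipT_add_right[OF ehat_L2T \<phi> \<psi>] by (simp add: fun_eq_iff u_coeffs_def fourier_coeff_def distrib_left)
  then have "fourier_series (u_coeffs (\<lambda>p. fst v p + fst w p)) p
      = fourier_series (u_coeffs (fst v)) p + fourier_series (u_coeffs (fst w)) p" for p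
    by (simp add: fourier_series_add abs_summable_u_coeffs \<phi> \<psi>)
  then show ?thesis
    unfolding Aop_eq hadd_def
    by (simp add: fourier_coeff_def ipT_add_right[OF ehat_L2T \<phi> \<psi>] ipT_add_right[OF d_L2T \<phi> \<psi>]
        fun_eq_iff algebra_simps)
qed

lemma Aop_hscale:
  assumes "v \<in> HT"
  shows "A U k (hscale c v) = hscale c (A U k v)"
proof -
  have "u_coeffs (\<lambda>p. c * fst v p) = (\<lambda>x. c * u_coeffs (fst v) x)"
    by (simp add: fun_eq_iff u_coeffs_def fourier_coeff_def ipT_mult_right ac_simps)
  then have "fourier_series (u_coeffs (\<lambda>p. c * fst v p)) p = c * fourier_series (u_coeffs (fst v)) p" for p
    using assms by (simp add: fourier_series_mult abs_summable_u_coeffs HT_iff)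
  then show ?thesis
    unfolding Aop_eq hscale_def by (simp add: fourier_coeff_def ipT_mult_right fun_eq_iff algebra_simps)
qed

definition A_bound :: "real \<Rightarrow> real" where
  "A_bound U = 8 * \<bar>\<epsilon>\<bar> + l1_u + \<bar>U\<bar> + 2 * (l1_\<upsilon> * l1_p) + 4 * (\<bar>hb\<bar> * \<bar>\<epsilon>\<bar>)"

lemma normT_sum4_le:
  assumes "a \<in> L2T" "b \<in> L2T" "c \<in> L2T" "e \<in> L2T"
  shows "normT (\<lambda>p. a p + b p + c p + e p) \<le> normT a + normT b + normT c + normT e"
  using normT_add[OF L2T_add[OF L2T_add[OF assms(1,2)] assms(3)] assms(4)]
    normT_add[OF L2T_add[OF assms(1,2)] assms(3)] normT_add[OF assms(1,2)] by linarith

lemma ipT_sum4: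
  assumes "\<phi> \<in> L2T" "a \<in> L2T" "b \<in> L2T" "c \<in> L2T" "e \<in> L2T"
  shows "ipT \<phi> (\<lambda>p. a p + b p + c p + e p) = ipT \<phi> a + ipT \<phi> b + ipT \<phi> c + ipT \<phi> e"
  using ipT_add_right[OF assms(1) L2T_add[OF L2T_add[OF assms(2,3)] assms(4)] assms(5)]
    ipT_add_right[OF assms(1) L2T_add[OF assms(2,3)] assms(4)] ipT_add_right[OF assms(1-3)] by simp

lemma normT_fst_Aop_le:
  assumes \<phi>: "\<phi> \<in> L2T"
  shows "normT (fst (A U k (\<phi>, z))) \<le> (8 * \<bar>\<epsilon>\<bar> + l1_u + \<bar>U\<bar>) * normT \<phi> + l1_\<upsilon> * l1_p * cmod z"
proof -
  have "normT (\<lambda>p. complex_of_real (ffun \<epsilon> k p) * \<phi> p) \<le> 8 * \<bar>\<epsilon>\<bar> * normT \<phi>"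
    by (rule L2T_mult_bounded(2)[OF ffun_measurable abs_ffun_le \<phi>])
  moreover have "normT (fourier_series (u_coeffs \<phi>)) \<le> l1_u * normT \<phi>"
    using normT_bounded[OF fourier_series_L2T[OF abs_summable_u_coeffs[OF \<phi>]]
        norm_fourier_series_le[OF abs_summable_u_coeffs[OF \<phi>]]]
      infsum_u_coeffs_le[OF \<phi>] by linarith
  moreover have "normT (\<lambda>p. complex_of_real U * (fourier_coeff \<phi> 0 * ehat 0 p)) \<le> \<bar>U\<bar> * normT \<phi>"
    using normT_mult[of "complex_of_real U * fourier_coeff \<phi> 0" "ehat 0"] norm_fourier_coeff_le[OF \<phi>, of 0]
    by (simp add: mult.assoc normT_ehat norm_mult mult_left_mono)
  moreover have "normT (\<lambda>p. complex_of_real (vhat k) * z * d k p) \<le> l1_\<upsilon> * l1_p * cmod z"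
  proof -
    have "normT (\<lambda>p. complex_of_real (vhat k) * z * d k p) = \<bar>vhat k\<bar> * cmod z * normT (d k)"
      using normT_mult[of "complex_of_real (vhat k) * z" "d k"] by (simp add: norm_mult)
    also have "\<dots> \<le> l1_\<upsilon> * cmod z * l1_p"
      using abs_vhat_le[of k] normT_d_le[of k] l1_nonneg normT_nonneg[of "d k"] by (intro mult_mono) auto
    finally show ?thesis
      by (simp add: ac_simps)
  qed
  moreover have fst_eq: "fst (A U k (\<phi>, z)) = (\<lambda>p. complex_of_real (ffun \<epsilon> k p) * \<phi> p + fourier_series (u_coeffs \<phi>) p
      + complex_of_real U * (fourier_coeff \<phi> 0 * ehat 0 p) + complex_of_real (vhat k) * z * d k p)"
    by (simp add: Aop_eq)
  moreover have "(8 * \<bar>\<epsilon>\<bar> + l1_u + \<bar>U\<bar>) * normT \<phi> = 8 * \<bar>\<epsilon>\<bar> * normT \<phi> + l1_u * normT \<phi> + \<bar>U\<bar> * normT \<phi>"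
    by (simp add: algebra_simps)
  ultimately show ?thesis
    unfolding fst_eq using normT_sum4_le[OF Aop_parts_L2T(1)[OF \<phi>, of k] Aop_parts_L2T(2)[OF \<phi>]
        Aop_parts_L2T(3)[OF \<phi>, of U] Aop_parts_L2T(4)[OF \<phi>, of k z]] by linarith
qed

lemma norm_snd_Aop_le:
  assumes \<phi>: "\<phi> \<in> L2T"
  shows "cmod (snd (A U k (\<phi>, z))) \<le> l1_\<upsilon> * l1_p * normT \<phi> + 4 * (\<bar>hb\<bar> * \<bar>\<epsilon>\<bar>) * cmod z"
proof -
  have "cmod (ipT (d k) \<phi>) \<le> normT (d k) * normT \<phi>"
    by (rule ipT_Cauchy_Schwarz[OF d_L2T \<phi>])
  also have "\<dots> \<le> l1_p * normT \<phi>"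
    by (rule mult_right_mono[OF normT_d_le normT_nonneg])
  finally have "\<bar>vhat k\<bar> * cmod (ipT (d k) \<phi>) \<le> l1_\<upsilon> * l1_p * normT \<phi>"
    using abs_vhat_le[of k] l1_nonneg normT_nonneg[of \<phi>] unfolding mult.assoc by (intro mult_mono) auto
  moreover have "\<bar>bfun \<epsilon> hb k\<bar> * cmod z \<le> 4 * (\<bar>hb\<bar> * \<bar>\<epsilon>\<bar>) * cmod z"
    using abs_bfun_le[of \<epsilon> hb k] by (rule mult_right_mono) simp
  moreover have "cmod (snd (A U k (\<phi>, z)))
      \<le> cmod (complex_of_real (vhat k) * ipT (d k) \<phi>) + cmod (complex_of_real (bfun \<epsilon> hb k) * z)"
    unfolding Aop_eq snd_conv fst_conv by (rule norm_triangle_ineq)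
  moreover have "cmod (complex_of_real (vhat k) * ipT (d k) \<phi>) = \<bar>vhat k\<bar> * cmod (ipT (d k) \<phi>)"
    "cmod (complex_of_real (bfun \<epsilon> hb k) * z) = \<bar>bfun \<epsilon> hb k\<bar> * cmod z"
    by (simp_all add: norm_mult)
  ultimately show ?thesis
    by linarith
qed

lemma Aop_bounded:
  assumes "v \<in> HT"
  shows "normH (A U k v) \<le> A_bound U * normH v"
proof -
  obtain \<phi> z where v: "v = (\<phi>, z)" and \<phi>: "\<phi> \<in> L2T"
    using assms HT_iff by (cases v) auto
  define a where "a = 8 * \<bar>\<epsilon>\<bar> + l1_u + \<bar>U\<bar> + l1_\<upsilon> * l1_p"
  define b where "b = l1_\<upsilon> * l1_p + 4 * (\<bar>hb\<bar> * \<bar>\<epsilon>\<bar>)"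
  have ab: "a \<ge> 0" "b \<ge> 0"
    using l1_nonneg by (simp_all add: a_def b_def)
  have "normH (A U k v) \<le> normT (fst (A U k v)) + cmod (snd (A U k v))"
    using normH_le_sum[of "fst (A U k v)" "snd (A U k v)"] by simp
  also have "\<dots> \<le> a * normT \<phi> + b * cmod z"
  proof -
    have "a * normT \<phi> + b * cmod z = ((8 * \<bar>\<epsilon>\<bar> + l1_u + \<bar>U\<bar>) * normT \<phi> + l1_\<upsilon> * l1_p * cmod z)
        + (l1_\<upsilon> * l1_p * normT \<phi> + 4 * (\<bar>hb\<bar> * \<bar>\<epsilon>\<bar>) * cmod z)"
      by (simp add: a_def b_def algebra_simps)
    then show ?thesis
      using normT_fst_Aop_le[OF \<phi>, of U k z] norm_snd_Aop_le[OF \<phi>, of U k z] unfolding v by linarith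
  qed
  also have "\<dots> \<le> a * normH v + b * normH v"
    unfolding v using ab by (intro add_mono mult_left_mono normT_le_normH norm_le_normH)
  also have "\<dots> = A_bound U * normH v"
    by (simp add: a_def b_def A_bound_def algebra_simps)
  finally show ?thesis .
qed

definition A_form :: "real \<Rightarrow> mom \<Rightarrow> (mom \<Rightarrow> complex) \<Rightarrow> complex \<Rightarrow> (mom \<Rightarrow> complex) \<Rightarrow> complex \<Rightarrow> complex" where
  "A_form U k \<phi> z \<psi> y = ipT \<phi> (\<lambda>p. complex_of_real (ffun \<epsilon> k p) * \<psi> p)
     + (\<Sum>\<^sub>\<infinity>x. u_coeffs \<psi> x * cnj (fourier_coeff \<phi> x))
     + complex_of_real U * (fourier_coeff \<psi> 0 * cnj (fourier_coeff \<phi> 0))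
     + complex_of_real (vhat k) * y * ipT \<phi> (d k)
     + cnj z * (complex_of_real (vhat k) * ipT (d k) \<psi> + complex_of_real (bfun \<epsilon> hb k) * y)"

lemma hinner_Aop:
  assumes "(\<phi>, z) \<in> HT" "(\<psi>, y) \<in> HT"
  shows "hinner (\<phi>, z) (A U k (\<psi>, y)) = A_form U k \<phi> z \<psi> y"
proof -
  have \<phi>: "\<phi> \<in> L2T" and \<psi>: "\<psi> \<in> L2T"
    using assms HT_iff by auto
  have "ipT \<phi> (fst (A U k (\<psi>, y))) = ipT \<phi> (\<lambda>p. complex_of_real (ffun \<epsilon> k p) * \<psi> p)
      + ipT \<phi> (fourier_series (u_coeffs \<psi>))
      + ipT \<phi> (\<lambda>p. complex_of_real U * (fourier_coeff \<psi> 0 * ehat 0 p))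
      + ipT \<phi> (\<lambda>p. complex_of_real (vhat k) * y * d k p)"
    unfolding Aop_eq fst_conv snd_conv
    by (rule ipT_sum4[OF \<phi> Aop_parts_L2T(1)[OF \<psi>] Aop_parts_L2T(2)[OF \<psi>] Aop_parts_L2T(3)[OF \<psi>]
          Aop_parts_L2T(4)[OF \<psi>]])
  also have "ipT \<phi> (fourier_series (u_coeffs \<psi>)) = (\<Sum>\<^sub>\<infinity>x. u_coeffs \<psi> x * cnj (fourier_coeff \<phi> x))"
    unfolding ipT_fourier_series[OF abs_summable_u_coeffs[OF \<psi>] \<phi>] fourier_coeff_def
    by (simp add: ipT_swap[of "ehat _" \<phi>])
  also have "ipT \<phi> (\<lambda>p. complex_of_real U * (fourier_coeff \<psi> 0 * ehat 0 p))
      = complex_of_real U * (fourier_coeff \<psi> 0 * cnj (fourier_coeff \<phi> 0))"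
    using ipT_mult_right[of \<phi> "complex_of_real U * fourier_coeff \<psi> 0" "ehat 0"]
    by (simp add: fourier_coeff_def ipT_swap[of \<phi>] mult.assoc)
  finally show ?thesis
    unfolding hinner_def A_form_def by (simp add: Aop_eq ipT_mult_right)
qed

lemma A_form_swap:
  "A_form U k \<psi> y \<phi> z = cnj (A_form U k \<phi> z \<psi> y)"
proof -
  have "ipT \<psi> (\<lambda>p. complex_of_real (ffun \<epsilon> k p) * \<phi> p) = cnj (ipT \<phi> (\<lambda>p. complex_of_real (ffun \<epsilon> k p) * \<psi> p))"
    by (rule ipT_real_mult_swap)
  moreover have "(\<Sum>\<^sub>\<infinity>x. u_coeffs \<phi> x * cnj (fourier_coeff \<psi> x)) = cnj (\<Sum>\<^sub>\<infinity>x. u_coeffs \<psi> x * cnj (fourier_coeff \<phi> x))"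
    unfolding infsum_cnj[symmetric] by (rule infsum_cong) (simp add: u_coeffs_def)
  ultimately show ?thesis
    unfolding A_form_def by (simp add: ipT_swap[of \<psi> "d k"] ipT_swap[of "d k" \<phi>] algebra_simps)
qed

lemma Aop_symmetric:
  assumes "v \<in> HT" "w \<in> HT"
  shows "Re (hinner v (A U k w)) = Re (hinner w (A U k v))"
  using assms hinner_Aop[of "fst v" "snd v" "fst w" "snd w"] hinner_Aop[of "fst w" "snd w" "fst v" "snd v"]
    A_form_swap[of U k "fst w" "snd w"]
  by simp

lemma bounded_symmetric_Aop: "bounded_symmetric (A U k) (A_bound U)"
  by unfold_locales (simp_all add: Aop_HT Aop_hadd Aop_hscale Aop_bounded Aop_symmetric)

lemma Re_form_Aop_U:
  assumes "v \<in> HT"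
  shows "Re (hinner v (A U' k v)) = Re (hinner v (A U k v)) + (U' - U) * (cmod (fourier_coeff (fst v) 0))^2"
proof -
  have "A_form U' k (fst v) (snd v) (fst v) (snd v) = A_form U k (fst v) (snd v) (fst v) (snd v)
      + complex_of_real ((U' - U) * (cmod (fourier_coeff (fst v) 0))^2)"
    unfolding A_form_def using cnj_mult_self[of "fourier_coeff (fst v) 0"] by (simp add: algebra_simps)
  then show ?thesis
    using hinner_Aop[of "fst v" "snd v" "fst v" "snd v"] assms by simp
qed

lemma hinner_Aop_unit_scalar: "hinner ((\<lambda>p. 0), 1) (A U 0 ((\<lambda>p. 0), 1)) = 0"
  by (simp add: Aop_eq hinner_def ipT_eq_integral bfun_0)

end

section \<open>The ground state energy\<close>

lemma TT_nonempty: "TT \<noteq> {}"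
  by (auto simp: TT_def)

lemma mono_on_tendsto_SUP_at_top:
  fixes f :: "real \<Rightarrow> 'a::{conditionally_complete_linorder, linorder_topology}"
  assumes mono: "mono_on {a..} f" and bdd: "bdd_above (f ` {a..})"
  shows "(f \<longlongrightarrow> (SUP x\<in>{a..}. f x)) at_top"
proof (rule increasing_tendsto)
  show "eventually (\<lambda>x. f x \<le> (SUP x\<in>{a..}. f x)) at_top"
    using bdd by (intro eventually_at_top_linorderI[of a] cSUP_upper) auto
  fix y
  assume "y < (SUP x\<in>{a..}. f x)"
  then obtain x0 where x0: "x0 \<ge> a" "y < f x0"
    using less_cSUP_iff[OF _ bdd] by auto
  have "f x0 \<le> f x" if "x \<ge> x0" for x
    using mono_onD[OF mono] x0(1) that by simp
  then show "eventually (\<lambda>x. y < f x) at_top"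
    using x0(2) by (intro eventually_at_top_linorderI[of x0]) (blast intro: less_le_trans)
qed

context lattice_model
begin

lemma bdd_below_numerical_ranges: "bdd_below (\<Union>k\<in>TT. numerical_range (A U k))"
  using bounded_symmetric.numerical_range_bounds(2)[OF bounded_symmetric_Aop]
  by (intro bdd_belowI[of _ "- A_bound U"]) blast

lemma Emin_eq_Inf_numerical_ranges: "Emin \<epsilon> hb u \<upsilon> p1 p2 U = Inf (\<Union>k\<in>TT. numerical_range (A U k))"
  unfolding Emin_def by (rule Inf_spectra_eq_Inf_numerical_ranges[OF TT_nonempty bounded_symmetric_Aop])

lemma Emin_mono:
  assumes "U \<le> U'"
  shows "Emin \<epsilon> hb u \<upsilon> p1 p2 U \<le> Emin \<epsilon> hb u \<upsilon> p1 p2 U'"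
  unfolding Emin_eq_Inf_numerical_ranges
proof (rule cInf_greatest)
  show "(\<Union>k\<in>TT. numerical_range (A U' k)) \<noteq> {}"
    using TT_nonempty bounded_symmetric.numerical_range_bounds(1)[OF bounded_symmetric_Aop] by blast
  fix q'
  assume "q' \<in> (\<Union>k\<in>TT. numerical_range (A U' k))"
  then obtain k v where kv: "k \<in> TT" "v \<in> HT" "normH v = 1" "q' = Re (hinner v (A U' k v))"
    unfolding numerical_range_def by blast
  have "Re (hinner v (A U k v)) \<in> (\<Union>k\<in>TT. numerical_range (A U k))"
    using kv unfolding numerical_range_def by blast
  then have "Inf (\<Union>k\<in>TT. numerical_range (A U k)) \<le> Re (hinner v (A U k v))"
    using bdd_below_numerical_ranges by (rule cInf_lower)
  also have "\<dots> \<le> q'"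
    unfolding kv(4) Re_form_Aop_U[OF kv(2), of U' k U] using assms by simp
  finally show "Inf (\<Union>k\<in>TT. numerical_range (A U k)) \<le> q'" .
qed

lemma Emin_nonpos: "Emin \<epsilon> hb u \<upsilon> p1 p2 U \<le> 0"
proof -
  have "(0::mom) \<in> TT"
    by (simp add: TT_def zero_prod_def)
  then have "0 \<in> (\<Union>k\<in>TT. numerical_range (A U k))"
    using HT_unit_scalar hinner_Aop_unit_scalar[of U] unfolding numerical_range_def by force
  then show ?thesis
    unfolding Emin_eq_Inf_numerical_ranges using bdd_below_numerical_ranges by (rule cInf_lower)
qed

end

lemma abs_summable_if_exp_weighted:
  assumes "\<alpha> \<ge> 0" "(\<lambda>z. exp (\<alpha> * lnorm z) * \<bar>p z\<bar>) summable_on UNIV"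
  shows "(\<lambda>z. \<bar>p z\<bar>) summable_on UNIV"
proof -
  have "norm \<bar>p z\<bar> \<le> exp (\<alpha> * lnorm z) * \<bar>p z\<bar>" for z
  proof -
    have "1 \<le> exp (\<alpha> * lnorm z)"
      using assms(1) by (simp add: lnorm_def)
    then show ?thesis
      by (simp add: mult_le_cancel_right1)
  qed
  then show ?thesis
    by (intro summable_on_comparison_test[OF assms(2)]) auto
qed

lemma even_if_rot90_invariant:
  assumes "\<And>x. f (rot90 x) = f x"
  shows "f (- x) = f x"
  using assms[of "rot90 x"] assms[of x] by (cases x) (simp add: rot90_def)

theorem lemma4p14:
  fixes \<epsilon> hb :: real and u \<upsilon> p1 p2 :: "int \<times> int \<Rightarrow> real"
  assumes "\<epsilon> \<ge> 0" and "hb \<ge> 0"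
    and "\<forall>x. u x \<ge> 0"
    and "\<forall>x. u (rot90 x) = u x" and "\<forall>x. \<upsilon> (rot90 x) = \<upsilon> x"
    and "\<forall>x. p1 (rot90 x) = p1 x" and "\<forall>x. p2 (rot90 x) = p2 x"
    and "(\<lambda>x. \<bar>u x\<bar>) summable_on UNIV" and "(\<lambda>x. \<bar>\<upsilon> x\<bar>) summable_on UNIV"
    and "\<exists>\<alpha>0>0. (\<lambda>z. exp (\<alpha>0 * lnorm z) * \<bar>p1 z\<bar>) summable_on UNIV
              \<and> (\<lambda>z. exp (\<alpha>0 * lnorm z) * \<bar>p2 z\<bar>) summable_on UNIV"
    and "\<forall>z. \<not> (even (fst z) \<and> even (snd z)) \<longrightarrow> p2 z = 0"
    and "\<exists>z. p1 z + p2 z \<noteq> 0"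
    and "\<forall>k\<in>TT. \<exists>x. complex_of_real (p2 x)
                     \<noteq> - exp (\<i> * complex_of_real (dotp k x / 2)) * complex_of_real (p1 x)"
  shows "mono_on {0..} (\<lambda>U. Emin \<epsilon> hb u \<upsilon> p1 p2 U)
         \<and> ((\<lambda>U. Emin \<epsilon> hb u \<upsilon> p1 p2 U) \<longlongrightarrow> (SUP U\<in>{0..}. Emin \<epsilon> hb u \<upsilon> p1 p2 U)) at_top
         \<and> (SUP U\<in>{0..}. Emin \<epsilon> hb u \<upsilon> p1 p2 U) \<le> 0"
proof -
  \<comment> \<open>only the summability hypotheses and the rotation invariance of \<open>\<upsilon>\<close> are needed\<close>
  obtain \<alpha> where \<alpha>: "\<alpha> \<ge> 0" "(\<lambda>z. exp (\<alpha> * lnorm z) * \<bar>p1 z\<bar>) summable_on UNIV"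
    "(\<lambda>z. exp (\<alpha> * lnorm z) * \<bar>p2 z\<bar>) summable_on UNIV"
    using assms(10) by (auto intro: less_imp_le)
  interpret lattice_model \<epsilon> hb u \<upsilon> p1 p2
    using assms(8,9) even_if_rot90_invariant[of \<upsilon>] assms(5)
      abs_summable_if_exp_weighted[OF \<alpha>(1,2)] abs_summable_if_exp_weighted[OF \<alpha>(1,3)]
    by unfold_locales auto
  have mono: "mono_on {0..} (\<lambda>U. Emin \<epsilon> hb u \<upsilon> p1 p2 U)"
    by (intro mono_onI Emin_mono)
  have "bdd_above ((\<lambda>U. Emin \<epsilon> hb u \<upsilon> p1 p2 U) ` {0..})"
    using Emin_nonpos by (intro bdd_aboveI[of _ 0]) auto
  then show ?thesis
    using mono mono_on_tendsto_SUP_at_top Emin_nonpos by (auto intro: cSUP_least)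
qed

end
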